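(* Let $\mathbf{X},\mathbf{D}$ be Banach spaces with $\mathbf{D}\subset\mathbf{X}$ and let $(A(t))_{t\in[0,1]}$ be closed linear operators on $\mathbf{X}$ with $\mathbf{D}(A(t))=\mathbf{D}$ for all $t$. Suppose $A:[0,1]\to\mathcal{L}(\mathbf{D},\mathbf{X})$ is analytic and there are $M>0$, $r<0$ and $\theta\in(0,\pi/2)$ with $A(t)\in\mathcal{S}(M,r,\theta)$ for all $t\in[0,1]$. Then there exist a convex open set $U\subset\mathbb{C}$ containing $[0,1]$ and an analytic extension of $A$ to $U$ such that $A(z)\in\mathcal{S}(2M,r,\theta)$ for all $z\in U$, and the function $A^{-1}:[0,1]\to\mathcal{L}(\mathbf{X},\mathbf{D})$ is analytic.
   Context: $\mathbf{D}\subset\mathbf{X}$ denotes continuous embedding; $\mathbf{D}(A)=\mathbf{D}$ means the domain of $A$, equipped with the graph norm $\|Ax\|_{\mathbf{X}}+\|x\|_{\mathbf{X}}$, coincides with $\mathbf{D}$ with equivalent norms (mutual continuous embeddings). $\mathcal{L}(\mathbf{X},\mathbf{D})$ is the Banach space of bounded linear operators $\mathbf{X}\to\mathbf{D}$ with operator norm, $\mathcal{L}(\mathbf{X})=\mathcal{L}(\mathbf{X},\mathbf{X})$. Analytic maps into a Banach space: locally norm-convergent power series. The resolvent set $\rho(A)$ consists of $\lambda\in\mathbb{C}$ such that $\lambda I-A:\mathbf{D}(A)\to\mathbf{X}$ is invertible, with inverse $R(\lambda,A)$. $\mathcal{S}(M,r,\theta)$ is the set of closed operators $A$ such that the sector $S_{r,\theta}:=\{\lambda\in\mathbb{C}:\lambda\ne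 r,\ |\arg(\lambda-r)|\le\pi-\theta\}$ is contained in $\rho(A)$ and $\|R(\lambda,A)\|_{\mathcal{L}(\mathbf{X})}\le M/(1+|\lambda|)$ for $\lambda\in S_{r,\theta}$. *)

theory Defs
  imports "HOL-Analysis.Analysis"
begin

text \<open>Complex Banach spaces: a real Banach space with a compatible complex
  scalar multiplication (HOL-Analysis has no complex vector space class).\<close>
class complex_banach = banach +
  fixes scaleC :: "complex \<Rightarrow> 'a \<Rightarrow> 'a" (infixr \<open>*\<^sub>C\<close> 75)
  assumes scaleC_of_real: "scaleC (of_real r) x = r *\<^sub>R x"
    and scaleC_add_right: "scaleC a (x + y) = scaleC a x + scaleC a y"
    and scaleC_add_left: "scaleC (a + b) x = scaleC a x + scaleC b x"
    and scaleC_scaleC: "scaleC a (scaleC b x) = scaleC (a * b) x"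
    and norm_scaleC: "norm (scaleC a x) = cmod a * norm x"

definition clin :: "('d::complex_banach \<Rightarrow>\<^sub>L 'x::complex_banach) \<Rightarrow> bool" where
  "clin T \<longleftrightarrow> (\<forall>c d. blinfun_apply T (c *\<^sub>C d) = c *\<^sub>C blinfun_apply T d)"

definition cscale :: "complex \<Rightarrow> ('d::complex_banach \<Rightarrow>\<^sub>L 'x::complex_banach) \<Rightarrow> ('d \<Rightarrow>\<^sub>L 'x)" where
  "cscale w T = Blinfun (\<lambda>d. w *\<^sub>C blinfun_apply T d)"

definition sector :: "real \<Rightarrow> real \<Rightarrow> complex set" where
  "sector r \<theta> = {l. l \<noteq> complex_of_real r \<and> \<bar>Arg (l - complex_of_real r)\<bar> \<le> pi - \<theta>}"

text \<open>D is embedded into X by the injective bounded complex-linear map j.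
  An operator T in L(D,X) is viewed as the operator on X with domain j`D,
  x \<mapsto> T (j^-1 x). It is a closed operator whose domain with graph norm
  equals D (equivalent norms; the bound graph norm \<le> C norm_D holds since T is bounded).\<close>
definition closed_op_dom :: "('d::complex_banach \<Rightarrow>\<^sub>L 'x::complex_banach) \<Rightarrow> ('d \<Rightarrow>\<^sub>L 'x) \<Rightarrow> bool" where
  "closed_op_dom j T \<longleftrightarrow> clin T \<and> closed (range (\<lambda>d. (blinfun_apply j d, blinfun_apply T d)))
     \<and> (\<exists>C. \<forall>d. norm d \<le> C * (norm (blinfun_apply T d) + norm (blinfun_apply j d)))"

text \<open>For lambda, (lambda I - T) : D \<rightarrow> X is d \<mapsto> lambda (j d) - T d, and
  R(lambda,T) x = j ((lambda I - T)^-1 x).\<close>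
definition in_S :: "('d::complex_banach \<Rightarrow>\<^sub>L 'x::complex_banach) \<Rightarrow> real \<Rightarrow> real \<Rightarrow> real \<Rightarrow> ('d \<Rightarrow>\<^sub>L 'x) \<Rightarrow> bool" where
  "in_S j M r \<theta> T \<longleftrightarrow> closed_op_dom j T \<and>
     (\<forall>l\<in>sector r \<theta>.
        bij (\<lambda>d. l *\<^sub>C blinfun_apply j d - blinfun_apply T d) \<and>
        (\<forall>x. norm (blinfun_apply j (inv (\<lambda>d. l *\<^sub>C blinfun_apply j d - blinfun_apply T d) x))
              \<le> M / (1 + cmod l) * norm x))"

text \<open>Analytic on a real set: locally a norm-convergent power series whose
  coefficients satisfy P (used for complex-linearity of coefficients).\<close>
definition real_analytic_into :: "('a::real_normed_vector \<Rightarrow> bool) \<Rightarrow> real set \<Rightarrow> (real \<Rightarrow> 'a) \<Rightarrow> bool" where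
  "real_analytic_into P S f \<longleftrightarrow> (\<forall>t0\<in>S. \<exists>e>0. \<exists>c. (\<forall>n. P (c n)) \<and>
     (\<forall>t\<in>S. \<bar>t - t0\<bar> < e \<longrightarrow>
        summable (\<lambda>n. \<bar>t - t0\<bar> ^ n * norm (c n)) \<and> (\<lambda>n. (t - t0) ^ n *\<^sub>R c n) sums f t))"

definition complex_analytic_op :: "complex set \<Rightarrow> (complex \<Rightarrow> ('d::complex_banach \<Rightarrow>\<^sub>L 'x::complex_banach)) \<Rightarrow> bool" where
  "complex_analytic_op U f \<longleftrightarrow> (\<forall>z0\<in>U. \<exists>e>0. \<exists>c. (\<forall>n. clin (c n)) \<and>
     (\<forall>z\<in>U. cmod (z - z0) < e \<longrightarrow>
        summable (\<lambda>n. cmod (z - z0) ^ n * norm (c n)) \<and> (\<lambda>n. cscale ((z - z0) ^ n) (c n)) sums f z))"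

end

theory Submission
  imports Defs
begin

text \<open>By compactness of \<open>[0, 1]\<close> the local power series of \<open>A\<close> have a common radius \<open>\<epsilon>\<close>;
  read as complex power series they agree on overlaps, by re-expansion and the identity theorem.
  Summing at each \<open>z\<close> the series centred at the point of \<open>[0, 1]\<close> nearest to \<open>z\<close> therefore gives an
  analytic extension to a tube around \<open>[0, 1]\<close>. Since \<open>r < 0\<close>, the point \<open>0\<close> lies in the sector,
  so each \<open>A t\<close> is invertible with a lower bound \<open>\<parallel>d\<parallel> \<le> K \<parallel>A t d\<parallel>\<close>. For \<open>\<lambda>\<close> in the sector,
  \<open>\<lambda> - B z = (\<lambda> - A t) - (B z - A t)\<close> is then inverted by a contraction argument as long as
  \<open>\<parallel>B z - A t\<parallel>\<close> is small against \<open>K\<close>, which doubles the resolvent bound; a Lebesgue number makes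
  the tube uniform. Finally the inverse of a power series whose constant term is invertible is a
  power series whose coefficients are given by a recursion and grow at most geometrically.\<close>

section \<open>Complex Banach spaces\<close>

lemma scaleC_zero_left [simp]: "0 *\<^sub>C (x::'a::complex_banach) = 0"
  using scaleC_of_real[of 0 x] by simp

lemma scaleC_one [simp]: "1 *\<^sub>C (x::'a::complex_banach) = x"
  using scaleC_of_real[of 1 x] by simp

lemma scaleC_scaleR: "a *\<^sub>C (r *\<^sub>R (x::'a::complex_banach)) = r *\<^sub>R (a *\<^sub>C x)"
  by (metis scaleC_of_real scaleC_scaleC mult.commute)

lemma bounded_linear_scaleC_right: "bounded_linear (\<lambda>x::'a::complex_banach. a *\<^sub>C x)"
  by (rule bounded_linear_intro[where K="cmod a"])
    (auto simp: scaleC_add_right scaleC_scaleR norm_scaleC mult.commute)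

lemma bounded_linear_scaleC_left: "bounded_linear (\<lambda>a. a *\<^sub>C (x::'a::complex_banach))"
proof (rule bounded_linear_intro[where K="norm x"])
  show "(r *\<^sub>R a) *\<^sub>C x = r *\<^sub>R (a *\<^sub>C x)" for r a
    by (metis scaleC_of_real scaleC_scaleC scaleR_conv_of_real)
qed (auto simp: scaleC_add_left norm_scaleC mult.commute)

lemmas scaleC_zero_right [simp] = linear_0[OF bounded_linear.linear[OF bounded_linear_scaleC_right]]
lemmas scaleC_diff_right = linear_diff[OF bounded_linear.linear[OF bounded_linear_scaleC_right]]
lemmas scaleC_minus_right = linear_neg[OF bounded_linear.linear[OF bounded_linear_scaleC_right]]
lemmas scaleC_sum_left = linear_sum[OF bounded_linear.linear[OF bounded_linear_scaleC_left]]
lemmas sums_scaleC_right = bounded_linear.sums[OF bounded_linear_scaleC_right]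

lemma norm_scaleC_blinfun_le: "norm (cscale c T) \<le> cmod c * norm T"
  by (rule norm_blinfun_bound)
    (auto simp: bounded_linear_Blinfun_apply[OF bounded_linear_compose[OF bounded_linear_scaleC_right
        blinfun.bounded_linear_right]] cscale_def norm_scaleC mult.assoc
      intro!: mult_left_mono norm_blinfun)

instantiation blinfun :: (complex_banach, complex_banach) complex_banach
begin

definition scaleC_blinfun :: "complex \<Rightarrow> ('a \<Rightarrow>\<^sub>L 'b) \<Rightarrow> ('a \<Rightarrow>\<^sub>L 'b)" where
  "scaleC_blinfun = cscale"

lemma scaleC_blinfun_apply [simp]: "blinfun_apply (c *\<^sub>C T) d = c *\<^sub>C blinfun_apply T d"
  unfolding scaleC_blinfun_def cscale_def
  by (simp add: bounded_linear_Blinfun_apply[OF bounded_linear_compose[OF bounded_linear_scaleC_right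
        blinfun.bounded_linear_right]])

instance
proof
  fix r :: real and a b :: complex and S T :: "'a \<Rightarrow>\<^sub>L 'b"
  show "of_real r *\<^sub>C T = r *\<^sub>R T"
    by (rule blinfun_eqI) (simp add: scaleC_of_real blinfun.scaleR_left)
  show "a *\<^sub>C (S + T) = a *\<^sub>C S + a *\<^sub>C T"
    by (rule blinfun_eqI) (simp add: scaleC_add_right blinfun.add_left)
  show "(a + b) *\<^sub>C T = a *\<^sub>C T + b *\<^sub>C T"
    by (rule blinfun_eqI) (simp add: scaleC_add_left blinfun.add_left)
  show "a *\<^sub>C b *\<^sub>C T = (a * b) *\<^sub>C T"
    by (rule blinfun_eqI) (simp add: scaleC_scaleC)
  show "norm (a *\<^sub>C T) = cmod a * norm T"
  proof (cases "a = 0")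
    case False
    have "inverse a *\<^sub>C a *\<^sub>C T = T"
      by (rule blinfun_eqI) (simp add: scaleC_scaleC False)
    then have "norm T \<le> cmod (inverse a) * norm (a *\<^sub>C T)"
      by (metis norm_scaleC_blinfun_le scaleC_blinfun_def)
    then have "cmod a * norm T \<le> cmod a * (cmod (inverse a) * norm (a *\<^sub>C T))"
      by (rule mult_left_mono) simp
    also have "\<dots> = norm (a *\<^sub>C T)"
      using False by (simp add: norm_inverse)
    finally have "cmod a * norm T \<le> norm (a *\<^sub>C T)" .
    with norm_scaleC_blinfun_le[of a T] show ?thesis
      unfolding scaleC_blinfun_def by linarith
  qed (simp add: scaleC_blinfun_def[symmetric] blinfun_eqI)
qed

end

lemma cscale_eq_scaleC: "cscale = scaleC"
  by (simp add: scaleC_blinfun_def)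

section \<open>Power series in complex Banach spaces\<close>

lemma summable_powser_norm_mono:
  fixes c :: "nat \<Rightarrow> 'a::real_normed_vector"
  assumes "summable (\<lambda>n. R^n * norm (c n))" "0 \<le> r" "r \<le> R"
  shows "summable (\<lambda>n. r^n * norm (c n))"
  by (rule summable_comparison_test'[OF assms(1)])
    (use assms in \<open>auto intro!: mult_right_mono power_mono\<close>)

lemma norm_powser_term: "norm (h^n *\<^sub>C (x::'a::complex_banach)) = cmod h ^ n * norm x"
  by (simp add: norm_scaleC norm_power)

lemma scaleC_of_real_power: "complex_of_real r ^ n *\<^sub>C (x::'a::complex_banach) = r^n *\<^sub>R x"
  by (simp only: of_real_power[symmetric] scaleC_of_real)

lemma summable_powser:
  fixes c :: "nat \<Rightarrow> 'a::complex_banach"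
  assumes "summable (\<lambda>n. cmod h^n * norm (c n))"
  shows "summable (\<lambda>n. h^n *\<^sub>C c n)"
  by (rule summable_norm_cancel) (use assms in \<open>simp add: norm_powser_term\<close>)

lemma summable_powser_shift:
  assumes "summable (\<lambda>n. R^n * norm (c n))" "R > 0"
  shows "summable (\<lambda>n. R^n * norm (c (n + m)))"
proof -
  have "summable (\<lambda>n. inverse (R^m) * (R^(n + m) * norm (c (n + m))))"
    by (rule summable_mult) (rule summable_ignore_initial_segment[OF assms(1)])
  then show ?thesis
    using assms(2) by (simp add: power_add field_simps)
qed

lemma powser_at_zero: "(\<Sum>n. (0::complex)^n *\<^sub>C (c n::'a::complex_banach)) = c 0"
  by (subst suminf_finite[of "{0}"]) (auto simp: power_0_left)

lemma norm_powser_diff_const_le: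
  fixes c :: "nat \<Rightarrow> 'a::complex_banach"
  assumes R: "R > 0" and S: "summable (\<lambda>n. R^n * norm (c n))" and h: "cmod h \<le> R"
  shows "norm ((\<Sum>n. h^n *\<^sub>C c n) - c 0) \<le> cmod h / R * (\<Sum>n. R^n * norm (c n))"
proof -
  have Sh: "summable (\<lambda>n. cmod h^n * norm (c n))"
    by (rule summable_powser_norm_mono[OF S]) (use h in auto)
  have S1: "summable (\<lambda>n. R^Suc n * norm (c (Suc n)))"
    using summable_ignore_initial_segment[OF S, of 1] by simp
  have Sh1: "summable (\<lambda>n. norm (h^Suc n *\<^sub>C c (Suc n)))"
    unfolding norm_powser_term using summable_ignore_initial_segment[OF Sh, of 1] by simp
  have "(\<Sum>n. h^n *\<^sub>C c n) - c 0 = (\<Sum>n. h^Suc n *\<^sub>C c (Suc n))"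
    using suminf_split_head[OF summable_powser[OF Sh]] by simp
  also have "norm \<dots> \<le> (\<Sum>n. norm (h^Suc n *\<^sub>C c (Suc n)))"
    by (rule summable_norm[OF Sh1])
  also have "\<dots> \<le> (\<Sum>n. cmod h / R * (R^Suc n * norm (c (Suc n))))"
  proof (rule suminf_le[OF _ Sh1 summable_mult[OF S1]])
    fix n
    have "cmod h ^ Suc n \<le> cmod h * R^n"
      by (simp add: mult_left_mono power_mono h)
    also have "\<dots> = cmod h / R * R^Suc n"
      using R by simp
    finally show "norm (h^Suc n *\<^sub>C c (Suc n)) \<le> cmod h / R * (R^Suc n * norm (c (Suc n)))"
      unfolding norm_powser_term mult.assoc[symmetric] by (rule mult_right_mono) simp
  qed
  also have "\<dots> = cmod h / R * (\<Sum>n. R^Suc n * norm (c (Suc n)))"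
    by (rule suminf_mult[OF S1])
  also have "\<dots> \<le> cmod h / R * (\<Sum>n. R^n * norm (c n))"
    using suminf_split_head[OF S] R by (intro mult_left_mono) auto
  finally show ?thesis .
qed

lemma powser_coeff0_eq_zero:
  fixes b :: "nat \<Rightarrow> 'a::complex_banach"
  assumes R: "R > 0" and S: "summable (\<lambda>n. R^n * norm (b n))" and lim: "0 islimpt Z"
    and Z_le: "\<And>h. h \<in> Z \<Longrightarrow> cmod h \<le> R"
    and vanish: "\<And>h. h \<in> Z \<Longrightarrow> h \<noteq> 0 \<Longrightarrow> (\<Sum>n. h^n *\<^sub>C b n) = 0"
  shows "b 0 = 0"
proof -
  define K where "K = (\<Sum>n. R^n * norm (b n))"
  have "norm (b 0) \<le> cmod h / R * K" if "h \<in> Z" "h \<noteq> 0" for h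
    using norm_powser_diff_const_le[OF R S Z_le[OF that(1)]] vanish[OF that] by (simp add: K_def)
  then have "eventually (\<lambda>h. norm (b 0) \<le> cmod h / R * K) (at 0 within Z)"
    by (auto simp: eventually_at intro!: exI[of _ 1])
  moreover have "((\<lambda>h. cmod h / R * K) \<longlongrightarrow> 0) (at 0 within Z)"
    using R by (auto intro!: tendsto_eq_intros)
  ultimately have "norm (b 0) \<le> 0"
    using lim by (intro tendsto_lowerbound) (auto simp: trivial_limit_within)
  then show ?thesis
    by simp
qed

lemma powser_coeffs_eq_zero:
  fixes b :: "nat \<Rightarrow> 'a::complex_banach"
  assumes R: "R > 0" and S: "summable (\<lambda>n. R^n * norm (b n))" and lim: "0 islimpt Z"
    and Z_le: "\<And>h. h \<in> Z \<Longrightarrow> cmod h \<le> R"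
    and vanish: "\<And>h. h \<in> Z \<Longrightarrow> h \<noteq> 0 \<Longrightarrow> (\<Sum>n. h^n *\<^sub>C b n) = 0"
  shows "b m = 0"
proof (induction m rule: less_induct)
  case (less m)
  have Sm: "summable (\<lambda>n. R^n * norm (b (n + m)))"
    by (rule summable_powser_shift[OF S R])
  have "(\<Sum>n. h^n *\<^sub>C b (n + m)) = 0" if h: "h \<in> Z" "h \<noteq> 0" for h
  proof -
    have Shm: "summable (\<lambda>n. h^n *\<^sub>C b (n + m))"
      by (intro summable_powser summable_powser_norm_mono[OF Sm]) (use Z_le h in auto)
    have "0 = (\<Sum>n. h^n *\<^sub>C b n)"
      using vanish h by simp
    also have "\<dots> = (\<Sum>n. h^(n + m) *\<^sub>C b (n + m)) + (\<Sum>i<m. h^i *\<^sub>C b i)"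
      by (intro suminf_split_initial_segment summable_powser summable_powser_norm_mono[OF S])
        (use Z_le h in auto)
    also have "\<dots> = h^m *\<^sub>C (\<Sum>n. h^n *\<^sub>C b (n + m))"
      using sums_unique[OF sums_scaleC_right[OF summable_sums[OF Shm], of "h^m"]] less
      by (simp add: scaleC_scaleC power_add mult.commute)
    finally have "inverse (h^m) *\<^sub>C h^m *\<^sub>C (\<Sum>n. h^n *\<^sub>C b (n + m)) = 0"
      by simp
    then show ?thesis
      using h by (simp add: scaleC_scaleC)
  qed
  then show "b m = 0"
    using powser_coeff0_eq_zero[OF R Sm lim Z_le] by simp
qed

lemma powser_coeffs_unique:
  fixes c c' :: "nat \<Rightarrow> 'a::complex_banach"
  assumes R: "R > 0" and S: "summable (\<lambda>n. R^n * norm (c n))" "summable (\<lambda>n. R^n * norm (c' n))"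
    and lim: "0 islimpt Z" and Z_le: "\<And>h. h \<in> Z \<Longrightarrow> cmod h \<le> R"
    and eq: "\<And>h. h \<in> Z \<Longrightarrow> (\<Sum>n. h^n *\<^sub>C c n) = (\<Sum>n. h^n *\<^sub>C c' n)"
  shows "c = c'"
proof -
  have "summable (\<lambda>n. R^n * norm (c n - c' n))"
    by (rule summable_comparison_test'[OF summable_add[OF S]])
      (use R in \<open>auto simp: distrib_left[symmetric] intro!: mult_left_mono norm_triangle_ineq4\<close>)
  moreover have "(\<Sum>n. h^n *\<^sub>C (c n - c' n)) = 0" if "h \<in> Z" for h
    using suminf_diff[of "\<lambda>n. h^n *\<^sub>C c n" "\<lambda>n. h^n *\<^sub>C c' n"] eq[OF that]
      summable_powser[OF summable_powser_norm_mono[OF S(1)]]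
      summable_powser[OF summable_powser_norm_mono[OF S(2)]] Z_le[OF that]
    by (simp add: scaleC_diff_right)
  ultimately have "c n - c' n = 0" for n
    using powser_coeffs_eq_zero[OF R _ lim Z_le, of "\<lambda>n. c n - c' n"] by blast
  then show ?thesis
    by auto
qed

section \<open>Absolutely summable double series\<close>

lemma suminf_eq_infsum_norm_summable:
  fixes f :: "nat \<Rightarrow> 'a::banach"
  assumes "summable (\<lambda>n. norm (f n))"
  shows "suminf f = infsum f UNIV"
  by (rule infsumI[symmetric, OF norm_summable_imp_has_sum[OF assms]])
    (rule summable_sums[OF summable_norm_cancel[OF assms]])

lemma abs_summable_double_series_rows:
  fixes F :: "nat \<Rightarrow> nat \<Rightarrow> 'a::banach"
  assumes abs: "(\<lambda>(m, n). norm (F m n)) summable_on UNIV"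
  shows "summable (\<lambda>n. norm (F m n))" and "summable (\<lambda>m. norm (\<Sum>n. F m n))"
proof -
  have Sigma: "(\<lambda>(m, n). norm (F m n)) summable_on UNIV \<times> UNIV"
    using abs by simp
  have rows: "(\<lambda>n. norm (F m n)) summable_on UNIV" for m
    using summable_on_SigmaD1[of "\<lambda>m n. norm (F m n)", OF Sigma] by simp
  have sums: "(\<lambda>m. infsum (\<lambda>n. norm (F m n)) UNIV) summable_on UNIV"
    using summable_on_SigmaD[OF Sigma] rows by simp
  show row: "summable (\<lambda>n. norm (F m n))" for m
    using rows by (auto intro: summable_on_imp_summable)
  show "summable (\<lambda>m. norm (\<Sum>n. F m n))"
  proof (rule summable_comparison_test'[OF summable_on_imp_summable[OF sums]])
    fix m
    have "norm (\<Sum>n. F m n) \<le> (\<Sum>n. norm (F m n))"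
      by (rule summable_norm[OF row])
    also have "\<dots> = infsum (\<lambda>n. norm (F m n)) UNIV"
      using row[of m] by (simp add: suminf_eq_infsum_norm_summable)
    finally show "norm (norm (\<Sum>n. F m n)) \<le> infsum (\<lambda>n. norm (F m n)) UNIV"
      by simp
  qed
qed

lemma abs_summable_double_series_swap:
  fixes F :: "nat \<Rightarrow> nat \<Rightarrow> 'a::banach"
  assumes abs: "(\<lambda>(m, n). norm (F m n)) summable_on UNIV"
  shows "(\<lambda>m. \<Sum>n. F m n) sums (\<Sum>n. \<Sum>m. F m n)"
proof -
  have abs': "(\<lambda>(n, m). norm (F m n)) summable_on UNIV"
    using summable_on_swap[of "\<lambda>(m, n). norm (F m n)" UNIV UNIV] abs
    by (simp add: case_prod_unfold)
  note rows = abs_summable_double_series_rows[OF abs]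
    and cols = abs_summable_double_series_rows[of "\<lambda>n m. F m n", OF abs']
  have "(\<Sum>m. \<Sum>n. F m n) = infsum (\<lambda>m. infsum (\<lambda>n. F m n) UNIV) UNIV"
    using rows by (simp add: suminf_eq_infsum_norm_summable)
  also have "\<dots> = infsum (\<lambda>n. infsum (\<lambda>m. F m n) UNIV) UNIV"
    using abs_summable_summable[of "\<lambda>(m, n). F m n"] abs
    by (intro infsum_swap_banach) (simp add: case_prod_unfold)
  also have "\<dots> = (\<Sum>n. \<Sum>m. F m n)"
    using cols by (simp add: suminf_eq_infsum_norm_summable)
  finally show ?thesis
    using summable_sums[OF summable_norm_cancel[OF rows(2)]] by simp
qed

lemma binomial_term_le:
  fixes x y :: real
  assumes "0 \<le> x" "0 \<le> y"
  shows "of_nat (n choose m) * x^m * y^(n - m) \<le> (x + y)^n"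
proof (cases "m \<le> n")
  case True
  have "of_nat (n choose m) * x^m * y^(n - m) \<le> (\<Sum>k\<le>n. of_nat (n choose k) * x^k * y^(n - k))"
    by (rule member_le_sum) (use True assms in auto)
  then show ?thesis
    by (simp add: binomial_ring)
qed (use assms in \<open>simp add: binomial_eq_0\<close>)

lemma summable_binomial_powser:
  fixes c :: "nat \<Rightarrow> 'a::real_normed_vector"
  assumes S: "summable (\<lambda>n. R^n * norm (c n))" and a: "\<bar>a\<bar> < R"
  shows "summable (\<lambda>n. of_nat (n choose m) * \<bar>a\<bar>^(n - m) * norm (c n))"
proof (rule summable_comparison_test'[OF summable_mult[OF S, of "inverse ((R - \<bar>a\<bar>)^m)"]])
  fix n
  have "of_nat (n choose m) * (R - \<bar>a\<bar>)^m * \<bar>a\<bar>^(n - m) \<le> R^n"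
    using binomial_term_le[of "R - \<bar>a\<bar>" "\<bar>a\<bar>" n m] a by simp
  then have "of_nat (n choose m) * \<bar>a\<bar>^(n - m) \<le> inverse ((R - \<bar>a\<bar>)^m) * R^n"
    using a by (simp add: field_simps)
  then show "norm (of_nat (n choose m) * \<bar>a\<bar>^(n - m) * norm (c n))
      \<le> inverse ((R - \<bar>a\<bar>)^m) * (R^n * norm (c n))"
    by (simp add: mult.assoc[symmetric] mult_right_mono)
qed

lemma powser_reexpand:
  fixes c :: "nat \<Rightarrow> 'a::complex_banach"
  assumes S: "summable (\<lambda>n. R^n * norm (c n))" and a: "cmod a < R" and ah: "cmod a + cmod h \<le> R"
  defines "d \<equiv> \<lambda>m. \<Sum>n. (of_nat (n choose m) * a^(n - m)) *\<^sub>C c n"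
  shows "summable (\<lambda>m. cmod h^m * norm (d m))"
    and "(\<lambda>m. h^m *\<^sub>C d m) sums (\<Sum>n. (a + h)^n *\<^sub>C c n)"
proof -
  define F where "F m n = (of_nat (n choose m) * a^(n - m) * h^m) *\<^sub>C c n" for m n
  have normF: "norm (F m n) = of_nat (n choose m) * cmod a^(n - m) * cmod h^m * norm (c n)" for m n
    unfolding F_def by (simp add: norm_scaleC norm_mult norm_power)
  have rows: "((\<lambda>m. norm (F m n)) has_sum (cmod a + cmod h)^n * norm (c n)) UNIV" for n
  proof -
    have "(\<lambda>m. norm (F m n)) sums (\<Sum>m\<le>n. norm (F m n))"
      by (rule sums_finite) (auto simp: normF binomial_eq_0)
    also have "(\<Sum>m\<le>n. norm (F m n)) = (cmod a + cmod h)^n * norm (c n)"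
      unfolding normF binomial_ring add.commute[of "cmod a"] sum_distrib_right
      by (rule sum.cong) (auto simp: mult_ac)
    finally show ?thesis
      by (rule sums_nonneg_imp_has_sum) simp
  qed
  have "(\<lambda>(n, m). norm (F m n)) summable_on UNIV \<times> UNIV"
  proof (rule summable_on_SigmaI[where g="\<lambda>n. (cmod a + cmod h)^n * norm (c n)"])
    show "(\<lambda>n. (cmod a + cmod h)^n * norm (c n)) summable_on UNIV"
      by (intro summable_nonneg_imp_summable_on summable_powser_norm_mono[OF S]) (auto simp: ah)
  qed (use rows in auto)
  then have abs: "(\<lambda>(m, n). norm (F m n)) summable_on UNIV"
    using summable_on_swap[of "\<lambda>(n, m). norm (F m n)" UNIV UNIV] by (simp add: case_prod_unfold)
  have col: "(\<Sum>n. F m n) = h^m *\<^sub>C d m" for m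
  proof -
    have "summable (\<lambda>n. norm ((of_nat (n choose m) * a^(n - m)) *\<^sub>C c n))"
      using summable_binomial_powser[OF S, of "cmod a" m] a by (simp add: norm_scaleC norm_mult norm_power)
    from sums_scaleC_right[OF summable_sums[OF summable_norm_cancel[OF this]], of "h^m"]
    show ?thesis
      unfolding d_def F_def by (simp add: sums_iff scaleC_scaleC mult_ac)
  qed
  have row: "(\<Sum>m. F m n) = (a + h)^n *\<^sub>C c n" for n
  proof -
    have "(\<Sum>m. F m n) = (\<Sum>m\<le>n. F m n)"
      by (rule suminf_finite) (auto simp: F_def binomial_eq_0)
    also have "\<dots> = (a + h)^n *\<^sub>C c n"
      unfolding F_def binomial_ring add.commute[of a] scaleC_sum_left by (rule sum.cong) (auto simp: mult_ac)
    finally show ?thesis .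
  qed
  show "summable (\<lambda>m. cmod h^m * norm (d m))"
    using abs_summable_double_series_rows(2)[OF abs] by (simp add: col norm_powser_term)
  show "(\<lambda>m. h^m *\<^sub>C d m) sums (\<Sum>n. (a + h)^n *\<^sub>C c n)"
    using abs_summable_double_series_swap[OF abs] by (simp add: col row)
qed

lemma Cauchy_product_sums_bilinear:
  fixes a :: "nat \<Rightarrow> 'a::banach" and b :: "nat \<Rightarrow> 'b::banach" and prod :: "'a \<Rightarrow> 'b \<Rightarrow> 'c::banach"
  assumes bil: "bounded_bilinear prod"
    and a: "summable (\<lambda>k. norm (a k))" and b: "summable (\<lambda>k. norm (b k))"
  shows "(\<lambda>n. \<Sum>i\<le>n. prod (a i) (b (n - i))) sums prod (\<Sum>k. a k) (\<Sum>k. b k)"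
proof -
  obtain K where K: "\<And>x y. norm (prod x y) \<le> norm x * norm y * K" and K_pos: "K > 0"
    using bounded_bilinear.pos_bounded[OF bil] by blast
  have sum_a: "(a has_sum (\<Sum>k. a k)) UNIV" and sum_b: "(b has_sum (\<Sum>k. b k)) UNIV"
    using a b by (auto intro: norm_summable_imp_has_sum summable_sums summable_norm_cancel)
  have rows: "((\<lambda>k. norm (a i) * norm (b k) * K) has_sum norm (a i) * (\<Sum>k. norm (b k)) * K) UNIV"
    for i
    using has_sum_cmult_right[OF norm_summable_imp_has_sum[OF _ summable_sums[OF b]], of "norm (a i) * K"] b
    by (simp add: mult_ac)
  have "(\<lambda>(i, k). norm (a i) * norm (b k) * K) summable_on UNIV \<times> UNIV"
    by (rule summable_on_SigmaI[where g="\<lambda>i. norm (a i) * (\<Sum>k. norm (b k)) * K"])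
      (use rows in \<open>auto intro!: summable_nonneg_imp_summable_on summable_mult2 a
        simp: K_pos less_imp_le suminf_nonneg b\<close>)
  then have "(\<lambda>(i, k). norm (prod (a i) (b k))) summable_on UNIV \<times> UNIV"
    by (rule summable_on_comparison_test) (use K in auto)
  then have summable: "(\<lambda>(i, k). prod (a i) (b k)) summable_on UNIV \<times> UNIV"
    using abs_summable_summable[of "\<lambda>(i, k). prod (a i) (b k)"] by (simp add: case_prod_unfold)
  have "((\<lambda>(i, k). prod (a i) (b k)) has_sum prod (\<Sum>k. a k) (\<Sum>k. b k)) (UNIV \<times> UNIV)"
    by (rule has_sum_SigmaI[OF _ _ summable])
      (auto intro: has_sum_bounded_linear bounded_bilinear.bounded_linear_right[OF bil]
        bounded_bilinear.bounded_linear_left[OF bil] sum_a sum_b)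
  also have "?this \<longleftrightarrow> ((\<lambda>(n, i). prod (a i) (b (n - i))) has_sum prod (\<Sum>k. a k) (\<Sum>k. b k))
      (SIGMA n:UNIV. {..n})"
    by (rule has_sum_reindex_bij_witness[where i="\<lambda>(n, i). (i, n - i)" and j="\<lambda>(i, k). (i + k, i)"])
      auto
  finally have "((\<lambda>n. \<Sum>i\<le>n. prod (a i) (b (n - i))) has_sum prod (\<Sum>k. a k) (\<Sum>k. b k)) UNIV"
    by (rule has_sum_SigmaD[where f="\<lambda>(n, i). prod (a i) (b (n - i))"]) auto
  then show ?thesis
    by (rule has_sum_imp_sums)
qed

section \<open>The class \<open>S(M, r, \<theta>)\<close> and its perturbations\<close>

lemma clinD: "clin T \<Longrightarrow> T (c *\<^sub>C d) = c *\<^sub>C T d"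
  unfolding clin_def by blast

lemma clin_zero: "clin 0"
  unfolding clin_def by simp

lemma clin_add: "clin S \<Longrightarrow> clin T \<Longrightarrow> clin (S + T)"
  unfolding clin_def by (simp add: blinfun.add_left scaleC_add_right)

lemma clin_minus: "clin T \<Longrightarrow> clin (- T)"
  unfolding clin_def by (simp add: blinfun.minus_left scaleC_minus_right)

lemma clin_scaleC: "clin T \<Longrightarrow> clin (a *\<^sub>C T)"
  unfolding clin_def by (simp add: scaleC_scaleC mult.commute)

lemma clin_compose: "clin S \<Longrightarrow> clin T \<Longrightarrow> clin (S o\<^sub>L T)"
  unfolding clin_def by simp

lemma clin_sum: "(\<And>i. i \<in> A \<Longrightarrow> clin (f i)) \<Longrightarrow> clin (sum f A)"
  by (induction A rule: infinite_finite_induct) (auto intro: clin_zero clin_add)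

lemma clin_suminf:
  assumes f: "summable f" and clin: "\<And>n. clin (f n)"
  shows "clin (suminf f)"
  unfolding clin_def
proof (intro allI)
  fix c d
  have "suminf f (c *\<^sub>C d) = (\<Sum>n. f n (c *\<^sub>C d))"
    by (rule bounded_linear.suminf[OF blinfun.bounded_linear_left f])
  also have "\<dots> = (\<Sum>n. c *\<^sub>C f n d)"
    using clin by (simp add: clinD)
  also have "\<dots> = c *\<^sub>C (\<Sum>n. f n d)"
    by (rule bounded_linear.suminf[symmetric, OF bounded_linear_scaleC_right
          bounded_linear.summable[OF blinfun.bounded_linear_left f]])
  also have "(\<Sum>n. f n d) = suminf f d"
    by (rule bounded_linear.suminf[symmetric, OF blinfun.bounded_linear_left f])
  finally show "suminf f (c *\<^sub>C d) = c *\<^sub>C suminf f d" .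
qed

lemma clin_summable_powser:
  fixes c :: "nat \<Rightarrow> 'd::complex_banach \<Rightarrow>\<^sub>L 'x::complex_banach"
  assumes "summable (\<lambda>n. cmod h^n * norm (c n))" "\<And>n. clin (c n)"
  shows "clin (\<Sum>n. h^n *\<^sub>C c n)"
  using assms by (intro clin_suminf summable_powser clin_scaleC)

lemma zero_in_sector: "r < 0 \<Longrightarrow> \<theta> \<le> pi \<Longrightarrow> 0 \<in> sector r \<theta>"
  unfolding sector_def by (simp add: of_real_minus[symmetric] del: of_real_minus)

lemma closed_op_dom_if_bounded_below:
  fixes j T :: "'d::complex_banach \<Rightarrow>\<^sub>L 'x::complex_banach"
  assumes clin: "clin T" and K: "K \<ge> 0" "\<And>d. norm d \<le> K * norm (T d)"
  shows "closed_op_dom j T"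
  unfolding closed_op_dom_def
proof (intro conjI exI allI)
  show "norm d \<le> K * (norm (T d) + norm (j d))" for d
    using K(2)[of d] mult_left_mono[of "norm (T d)" "norm (T d) + norm (j d)" K] K(1) by simp
  have "norm d \<le> (K + 1) * norm (j d, T d)" for d
  proof -
    have "norm d \<le> K * norm (j d, T d)"
      using K(2)[of d] mult_left_mono[OF norm_snd_le[of "T d" "j d"] K(1)] by simp
    also have "\<dots> \<le> (K + 1) * norm (j d, T d)"
      by (simp add: distrib_right)
    finally show ?thesis .
  qed
  then have "complete (range (\<lambda>d. (j d, T d)))"
    using K(1) by (intro complete_isometric_image[of "1 / (K + 1)"] bounded_linear_Pair
        blinfun.bounded_linear_right) (auto simp: field_simps complete_UNIV)
  then show "closed (range (\<lambda>d. (j d, T d)))"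
    by (rule complete_imp_closed)
qed (use clin in simp)

lemma in_S_bounded_below:
  fixes j T :: "'d::complex_banach \<Rightarrow>\<^sub>L 'x::complex_banach"
  assumes S: "in_S j M r \<theta> T" and zero: "0 \<in> sector r \<theta>"
  shows "bij (blinfun_apply T)" and "\<exists>K\<ge>0. \<forall>d. norm d \<le> K * norm (T d)"
proof -
  have bij: "bij (\<lambda>d. - T d)" and bound: "\<And>x. norm (j (inv (\<lambda>d. - T d) x)) \<le> M * norm x"
    using S zero unfolding in_S_def by auto
  then show "bij (blinfun_apply T)"
    using bij_comp[OF bij bij_uminus] by (simp add: comp_def)
  obtain C where C: "\<And>d. norm d \<le> C * (norm (T d) + norm (j d))"
    using S unfolding in_S_def closed_op_dom_def by blast
  have "norm d \<le> (\<bar>C\<bar> * (1 + \<bar>M\<bar>)) * norm (T d)" for d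
  proof -
    have "norm (j d) \<le> M * norm (T d)"
      using bound[of "- T d"] bij by (simp add: bij_is_inj inv_f_f[where f="\<lambda>d. - T d"])
    also have "\<dots> \<le> \<bar>M\<bar> * norm (T d)"
      by (simp add: mult_right_mono)
    finally have "norm (T d) + norm (j d) \<le> (1 + \<bar>M\<bar>) * norm (T d)"
      by (simp add: algebra_simps)
    then have "\<bar>C\<bar> * (norm (T d) + norm (j d)) \<le> \<bar>C\<bar> * ((1 + \<bar>M\<bar>) * norm (T d))"
      by (rule mult_left_mono) simp
    moreover have "C * (norm (T d) + norm (j d)) \<le> \<bar>C\<bar> * (norm (T d) + norm (j d))"
      by (rule mult_right_mono) auto
    ultimately show ?thesis
      using C[of d] by simp
  qed
  then show "\<exists>K\<ge>0. \<forall>d. norm d \<le> K * norm (T d)"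
    by (intro exI[of _ "\<bar>C\<bar> * (1 + \<bar>M\<bar>)"]) auto
qed

lemma linear_inv_bij:
  fixes L :: "'a::real_vector \<Rightarrow> 'b::real_vector"
  assumes L: "linear L" "bij L"
  shows "linear (inv L)"
proof -
  have LS: "L (inv L y) = y" and eq: "L x = L x' \<Longrightarrow> x = x'" for x x' y
    using L(2) by (auto simp: bij_is_surj surj_f_inv_f bij_is_inj inj_eq)
  show ?thesis
    by (rule linearI) (rule eq, simp add: LS linear_add[OF L(1)] linear_scale[OF L(1)])+
qed

text \<open>Neumann-type perturbation of a bijective linear map, via the contraction
  \<open>w \<mapsto> y + E (L\<inverse> w)\<close>; the solution of \<open>(L - E) d = y\<close> is \<open>d = L\<inverse> w\<close> at its fixed point \<open>w\<close>.\<close>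

lemma bij_diff_small_perturbation:
  fixes L E :: "'a::real_vector \<Rightarrow> 'b::banach"
  assumes L: "linear L" "bij L" and E: "linear E"
    and small: "\<And>w. norm (E (inv L w)) \<le> 1/2 * norm w"
  shows "bij (\<lambda>d. L d - E d)"
    and "\<exists>w. inv (\<lambda>d. L d - E d) y = inv L w \<and> norm w \<le> 2 * norm y"
proof -
  let ?S = "inv L" and ?L' = "\<lambda>d. L d - E d"
  have LS: "L (?S w) = w" for w
    using L(2) by (simp add: bij_is_surj surj_f_inv_f)
  have SL: "?S (L d) = d" for d
    using L(2) by (simp add: bij_is_inj inv_f_f)
  have fixpoint: "\<exists>w. y + E (?S w) = w" for y
  proof -
    have "\<forall>w w'. dist (y + E (?S w)) (y + E (?S w')) \<le> 1/2 * dist w w'"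
      using small by (simp add: dist_norm linear_diff[OF linear_inv_bij[OF L], symmetric]
          linear_diff[OF E, symmetric])
    then show ?thesis
      using banach_fix_type[of "1/2" "\<lambda>w. y + E (?S w)"] by auto
  qed
  have solve: "?L' (?S w) = y" if "y + E (?S w) = w" for y w
    using that by (simp add: LS) (metis add_diff_cancel_right')
  have "inj ?L'"
    unfolding linear_injective_0[OF linear_compose_sub[OF L(1) E]]
  proof (intro allI impI)
    fix d assume "L d - E d = 0"
    then have Ld: "L d = E (?S (L d))"
      unfolding SL by simp
    have "norm (L d) \<le> 1/2 * norm (L d)"
      by (subst (1) Ld) (rule small)
    then have "L d = L 0"
      by (simp add: linear_0[OF L(1)])
    then show "d = 0"
      using bij_is_inj[OF L(2)] by (rule injD[rotated])
  qed
  moreover have "y \<in> range ?L'" for y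
    using fixpoint[of y] solve by blast
  then have "surj ?L'"
    by auto
  ultimately show bij: "bij ?L'"
    by (rule bijI)
  obtain w where w: "y + E (?S w) = w"
    using fixpoint by blast
  have "inv ?L' y = ?S w"
    using inv_f_f[OF bij_is_inj[OF bij], of "?S w"] solve[OF w] by simp
  moreover have "norm w \<le> 2 * norm y"
    using norm_triangle_ineq[of y "E (?S w)"] small[of w] w by simp
  ultimately show "\<exists>w. inv ?L' y = ?S w \<and> norm w \<le> 2 * norm y"
    by blast
qed

lemma in_S_resolvent_bound:
  fixes j T :: "'d::complex_banach \<Rightarrow>\<^sub>L 'x::complex_banach"
  assumes S: "in_S j M r \<theta> T" and M: "M \<ge> 0" and l: "l \<in> sector r \<theta>"
    and K: "K \<ge> 0" "\<And>d. norm d \<le> K * norm (T d)"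
  shows "norm (inv (\<lambda>d. l *\<^sub>C j d - T d) x) \<le> K * (M + 1) * norm x"
proof -
  let ?d = "inv (\<lambda>d. l *\<^sub>C j d - T d) x"
  have bij: "bij (\<lambda>d. l *\<^sub>C j d - T d)" and res: "norm (j ?d) \<le> M / (1 + cmod l) * norm x"
    using S l unfolding in_S_def by auto
  have "l *\<^sub>C j ?d - T ?d = x"
    using surj_f_inv_f[OF bij_is_surj[OF bij]] by simp
  then have "T ?d = l *\<^sub>C j ?d - x"
    by (simp add: algebra_simps)
  then have "norm (T ?d) \<le> cmod l * norm (j ?d) + norm x"
    using norm_triangle_ineq4[of "l *\<^sub>C j ?d" x] by (simp add: norm_scaleC)
  also have "cmod l * norm (j ?d) \<le> cmod l * (M / (1 + cmod l) * norm x)"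
    by (rule mult_left_mono[OF res]) simp
  also have "\<dots> = (cmod l / (1 + cmod l)) * M * norm x"
    by simp
  also have "\<dots> \<le> 1 * M * norm x"
    using M by (intro mult_right_mono) (auto simp: add_pos_nonneg)
  finally have "norm (T ?d) \<le> (M + 1) * norm x"
    by (simp add: algebra_simps)
  with K show ?thesis
    by (metis mult.assoc mult_left_mono order_trans)
qed

lemma bounded_below_perturbation:
  fixes T T' :: "'a::real_normed_vector \<Rightarrow>\<^sub>L 'b::real_normed_vector"
  assumes K: "K \<ge> 0" "\<And>d. norm d \<le> K * norm (T d)" and small: "norm (T' - T) * K \<le> 1/2"
  shows "norm d \<le> 2 * K * norm (T' d)"
proof -
  have "norm (T d) \<le> norm (T' d) + norm (T' - T) * norm d"
    using norm_triangle_ineq4[of "T' d" "(T' - T) d"] norm_blinfun[of "T' - T" d]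
    by (simp add: blinfun.diff_left)
  then have "K * norm (T d) \<le> K * (norm (T' d) + norm (T' - T) * norm d)"
    by (rule mult_left_mono[OF _ K(1)])
  also have "\<dots> = K * norm (T' d) + (norm (T' - T) * K) * norm d"
    by (simp add: algebra_simps)
  also have "\<dots> \<le> K * norm (T' d) + 1/2 * norm d"
    using mult_right_mono[OF small norm_ge_zero] by simp
  finally show ?thesis
    using K(2)[of d] by simp
qed

lemma resolvent_perturbation:
  fixes j T T' :: "'d::complex_banach \<Rightarrow>\<^sub>L 'x::complex_banach"
  assumes S: "in_S j M r \<theta> T" and M: "M \<ge> 0" and l: "l \<in> sector r \<theta>"
    and K: "K \<ge> 0" "\<And>d. norm d \<le> K * norm (T d)"
    and small: "norm (T' - T) * (K * (M + 1)) \<le> 1/2"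
  shows "bij (\<lambda>d. l *\<^sub>C j d - T' d)"
    and "norm (j (inv (\<lambda>d. l *\<^sub>C j d - T' d) y)) \<le> 2 * M / (1 + cmod l) * norm y"
proof -
  let ?L = "\<lambda>d. l *\<^sub>C j d - T d" and ?E = "blinfun_apply (T' - T)"
  have lin: "linear ?L"
    by (intro linear_compose_sub bounded_linear.linear[OF bounded_linear_compose[OF
          bounded_linear_scaleC_right blinfun.bounded_linear_right]]
        bounded_linear.linear[OF blinfun.bounded_linear_right])
  have bij: "bij ?L" and res: "\<And>w. norm (j (inv ?L w)) \<le> M / (1 + cmod l) * norm w"
    using S l unfolding in_S_def by auto
  have "norm (?E (inv ?L w)) \<le> 1/2 * norm w" for w
  proof -
    have "norm (?E (inv ?L w)) \<le> norm (T' - T) * (K * (M + 1) * norm w)"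
      by (rule order_trans[OF norm_blinfun mult_left_mono])
        (use in_S_resolvent_bound[OF S M l K] in simp_all)
    also have "\<dots> \<le> 1/2 * norm w"
      using mult_right_mono[OF small norm_ge_zero] by (simp add: mult.assoc)
    finally show ?thesis .
  qed
  note perturbed = bij_diff_small_perturbation[OF lin bij
      bounded_linear.linear[OF blinfun.bounded_linear_right] this]
  have L': "(\<lambda>d. ?L d - ?E d) = (\<lambda>d. l *\<^sub>C j d - T' d)"
    by (simp add: fun_eq_iff blinfun.diff_left)
  show "bij (\<lambda>d. l *\<^sub>C j d - T' d)"
    using perturbed(1) unfolding L' .
  obtain w where w: "inv (\<lambda>d. l *\<^sub>C j d - T' d) y = inv ?L w" "norm w \<le> 2 * norm y"
    using perturbed(2)[of y] unfolding L' by blast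
  have "norm (j (inv ?L w)) \<le> M / (1 + cmod l) * (2 * norm y)"
    using M by (intro order_trans[OF res[of w]] mult_left_mono[OF w(2)]) (simp add: add_pos_nonneg)
  then show "norm (j (inv (\<lambda>d. l *\<^sub>C j d - T' d) y)) \<le> 2 * M / (1 + cmod l) * norm y"
    using w(1) by (simp add: mult_ac)
qed

lemma in_S_perturbation:
  fixes j T T' :: "'d::complex_banach \<Rightarrow>\<^sub>L 'x::complex_banach"
  assumes S: "in_S j M r \<theta> T" and M: "M \<ge> 0"
    and K: "K \<ge> 0" "\<And>d. norm d \<le> K * norm (T d)"
    and clin: "clin T'" and small: "norm (T' - T) * (K * (M + 1)) \<le> 1/2"
  shows "in_S j (2 * M) r \<theta> T'"
proof -
  have "norm (T' - T) * K \<le> norm (T' - T) * (K * (M + 1))"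
    using K(1) M by (intro mult_left_mono) (auto simp: algebra_simps)
  with small have "norm (T' - T) * K \<le> 1/2"
    by linarith
  then have "closed_op_dom j T'"
    using K by (intro closed_op_dom_if_bounded_below[OF clin, of "2 * K"] bounded_below_perturbation) auto
  then show ?thesis
    unfolding in_S_def using resolvent_perturbation[OF S M _ K small] by blast
qed

section \<open>Local expansions on \<open>[0, 1]\<close>\<close>

definition local_expansion :: "(real \<Rightarrow> 'a::complex_banach) \<Rightarrow> real \<Rightarrow> real \<Rightarrow> (nat \<Rightarrow> 'a) \<Rightarrow> bool"
  where "local_expansion A t\<^sub>0 R c \<longleftrightarrow> summable (\<lambda>n. R^n * norm (c n)) \<and>
    (\<forall>t\<in>{0..1}. \<bar>t - t\<^sub>0\<bar> < R \<longrightarrow> (\<Sum>n. complex_of_real (t - t\<^sub>0)^n *\<^sub>C c n) = A t)"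

lemma cmod_of_real_diff [simp]: "cmod (complex_of_real a - complex_of_real b) = \<bar>a - b\<bar>"
  by (metis norm_of_real of_real_diff)

lemma local_expansion_at_centre:
  assumes "local_expansion A t\<^sub>0 R c" "R > 0" "t\<^sub>0 \<in> {0..1}"
  shows "c 0 = A t\<^sub>0"
proof -
  have "\<forall>t\<in>{0..1}. \<bar>t - t\<^sub>0\<bar> < R \<longrightarrow> (\<Sum>n. complex_of_real (t - t\<^sub>0)^n *\<^sub>C c n) = A t"
    using assms(1) unfolding local_expansion_def by blast
  from bspec[OF this assms(3)] assms(2) show ?thesis
    by (simp add: powser_at_zero)
qed

lemma islimpt_zero_unit_interval_offsets:
  assumes t: "t\<^sub>0 \<in> {0..1}" and R: "R > 0"
  shows "0 islimpt {complex_of_real (t - t\<^sub>0) | t. t \<in> {0..1} \<and> \<bar>t - t\<^sub>0\<bar> < R}"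
  unfolding islimpt_approachable
proof (intro allI impI)
  fix e :: real assume e: "e > 0"
  define \<delta> where "\<delta> = min (min e R) 1 / 2"
  have \<delta>: "0 < \<delta>" "\<delta> < e" "\<delta> < R" "\<delta> \<le> 1/2"
    using e R unfolding \<delta>_def by auto
  define t where "t = (if t\<^sub>0 \<le> 1/2 then t\<^sub>0 + \<delta> else t\<^sub>0 - \<delta>)"
  have "t \<in> {0..1}" "\<bar>t - t\<^sub>0\<bar> = \<delta>"
    using t \<delta> unfolding t_def by auto
  then show "\<exists>x'\<in>{complex_of_real (t - t\<^sub>0) | t. t \<in> {0..1} \<and> \<bar>t - t\<^sub>0\<bar> < R}. x' \<noteq> 0 \<and> dist x' 0 < e"
    using \<delta> by (intro bexI[of _ "complex_of_real (t - t\<^sub>0)"]) auto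
qed

lemma local_expansion_coeffs_reexpand:
  fixes c\<^sub>0 c\<^sub>1 :: "nat \<Rightarrow> 'a::complex_banach"
  assumes e\<^sub>0: "local_expansion A t\<^sub>0 R\<^sub>0 c\<^sub>0" and e\<^sub>1: "local_expansion A t\<^sub>1 R\<^sub>1 c\<^sub>1" and R\<^sub>1: "R\<^sub>1 > 0"
    and t\<^sub>1: "t\<^sub>1 \<in> {0..1}" and close: "\<bar>t\<^sub>1 - t\<^sub>0\<bar> < R\<^sub>0"
  shows "c\<^sub>1 = (\<lambda>m. \<Sum>n. (of_nat (n choose m) * complex_of_real (t\<^sub>1 - t\<^sub>0)^(n - m)) *\<^sub>C c\<^sub>0 n)"
proof -
  define a where "a = complex_of_real (t\<^sub>1 - t\<^sub>0)"
  have a: "cmod a = \<bar>t\<^sub>1 - t\<^sub>0\<bar>" "cmod a < R\<^sub>0"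
    using close unfolding a_def by auto
  have "summable (\<lambda>n. R\<^sub>0^n * norm (c\<^sub>0 n))"
    using e\<^sub>0 unfolding local_expansion_def by blast
  note reexpand = powser_reexpand[OF this a(2)]
  define R where "R = min R\<^sub>1 (R\<^sub>0 - cmod a)"
  have R: "R > 0" "R \<le> R\<^sub>1" "cmod a + R \<le> R\<^sub>0"
    using R\<^sub>1 a unfolding R_def by auto
  define Z where "Z = {complex_of_real (t - t\<^sub>1) | t. t \<in> {0..1} \<and> \<bar>t - t\<^sub>1\<bar> < R}"
  have "c\<^sub>1 = (\<lambda>m. \<Sum>n. (of_nat (n choose m) * a^(n - m)) *\<^sub>C c\<^sub>0 n)" (is "_ = ?d")
  proof (rule powser_coeffs_unique[OF R(1) _ _ _ _ _, of c\<^sub>1 ?d Z])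
    show "summable (\<lambda>n. R^n * norm (?d n))"
      using reexpand(1)[of "complex_of_real R"] R by simp
    show "summable (\<lambda>n. R^n * norm (c\<^sub>1 n))"
      using e\<^sub>1 R unfolding local_expansion_def by (auto intro: summable_powser_norm_mono)
    show "0 islimpt Z"
      unfolding Z_def by (rule islimpt_zero_unit_interval_offsets[OF t\<^sub>1 R(1)])
    show "cmod h \<le> R" if "h \<in> Z" for h
      using that unfolding Z_def by auto
    show "(\<Sum>n. h^n *\<^sub>C c\<^sub>1 n) = (\<Sum>n. h^n *\<^sub>C ?d n)" if "h \<in> Z" for h
    proof -
      obtain t where t: "t \<in> {0..1}" "\<bar>t - t\<^sub>1\<bar> < R" and h: "h = complex_of_real (t - t\<^sub>1)"
        using \<open>h \<in> Z\<close> unfolding Z_def by auto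
      have sum: "a + h = complex_of_real (t - t\<^sub>0)"
        unfolding a_def h by simp
      have le: "cmod a + cmod h \<le> R\<^sub>0"
        using h t R a by simp
      have "(\<Sum>n. h^n *\<^sub>C c\<^sub>1 n) = A t"
        using e\<^sub>1 t R h unfolding local_expansion_def by auto
      also have "\<dots> = (\<Sum>n. complex_of_real (t - t\<^sub>0)^n *\<^sub>C c\<^sub>0 n)"
        using e\<^sub>0 t R a unfolding local_expansion_def by auto
      also have "\<dots> = (\<Sum>n. h^n *\<^sub>C ?d n)"
        using reexpand(2)[OF le] unfolding sum by (simp add: sums_iff)
      finally show ?thesis .
    qed
  qed
  then show ?thesis
    unfolding a_def .
qed

lemma local_expansion_reexpand:
  fixes c\<^sub>0 c\<^sub>1 :: "nat \<Rightarrow> 'a::complex_banach"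
  assumes e\<^sub>0: "local_expansion A t\<^sub>0 R\<^sub>0 c\<^sub>0" and e\<^sub>1: "local_expansion A t\<^sub>1 R\<^sub>1 c\<^sub>1" and R\<^sub>1: "R\<^sub>1 > 0"
    and t\<^sub>1: "t\<^sub>1 \<in> {0..1}" and close: "\<bar>t\<^sub>1 - t\<^sub>0\<bar> < R\<^sub>0"
  shows "summable (\<lambda>n. (R\<^sub>0 - \<bar>t\<^sub>1 - t\<^sub>0\<bar>)^n * norm (c\<^sub>1 n))"
    and "cmod (z - complex_of_real t\<^sub>1) + \<bar>t\<^sub>1 - t\<^sub>0\<bar> \<le> R\<^sub>0 \<Longrightarrow>
      (\<Sum>n. (z - complex_of_real t\<^sub>1)^n *\<^sub>C c\<^sub>1 n) = (\<Sum>n. (z - complex_of_real t\<^sub>0)^n *\<^sub>C c\<^sub>0 n)"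
proof -
  define a where "a = complex_of_real (t\<^sub>1 - t\<^sub>0)"
  have a: "cmod a = \<bar>t\<^sub>1 - t\<^sub>0\<bar>" "cmod a < R\<^sub>0"
    using close unfolding a_def by auto
  have S\<^sub>0: "summable (\<lambda>n. R\<^sub>0^n * norm (c\<^sub>0 n))"
    using e\<^sub>0 unfolding local_expansion_def by blast
  have c\<^sub>1: "(\<Sum>n. (of_nat (n choose m) * a^(n - m)) *\<^sub>C c\<^sub>0 n) = c\<^sub>1 m" for m
    using local_expansion_coeffs_reexpand[OF e\<^sub>0 e\<^sub>1 R\<^sub>1 t\<^sub>1 close] unfolding a_def[symmetric] by simp
  note reexpand = powser_reexpand[OF S\<^sub>0 a(2), unfolded c\<^sub>1]
  show "summable (\<lambda>n. (R\<^sub>0 - \<bar>t\<^sub>1 - t\<^sub>0\<bar>)^n * norm (c\<^sub>1 n))"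
    using reexpand(1)[of "complex_of_real (R\<^sub>0 - cmod a)"] a by simp
  have sum: "a + (z - complex_of_real t\<^sub>1) = z - complex_of_real t\<^sub>0"
    unfolding a_def by simp
  show "(\<Sum>n. (z - complex_of_real t\<^sub>1)^n *\<^sub>C c\<^sub>1 n) = (\<Sum>n. (z - complex_of_real t\<^sub>0)^n *\<^sub>C c\<^sub>0 n)"
    if "cmod (z - complex_of_real t\<^sub>1) + \<bar>t\<^sub>1 - t\<^sub>0\<bar> \<le> R\<^sub>0"
    using reexpand(2)[of "z - complex_of_real t\<^sub>1"] that a unfolding sum by (simp add: sums_iff)
qed

lemma local_expansion_recentre:
  fixes c\<^sub>0 c\<^sub>1 :: "nat \<Rightarrow> 'a::complex_banach"
  assumes e\<^sub>0: "local_expansion A t\<^sub>0 R\<^sub>0 c\<^sub>0" and e\<^sub>1: "local_expansion A t\<^sub>1 R\<^sub>1 c\<^sub>1" and R\<^sub>1: "R\<^sub>1 > 0"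
    and t\<^sub>1: "t\<^sub>1 \<in> {0..1}" and R: "R > 0" and close: "\<bar>t\<^sub>1 - t\<^sub>0\<bar> + R \<le> R\<^sub>0"
  shows "local_expansion A t\<^sub>1 R c\<^sub>1"
  unfolding local_expansion_def
proof
  have "\<bar>t\<^sub>1 - t\<^sub>0\<bar> < R\<^sub>0"
    using R close by linarith
  note reexpand = local_expansion_reexpand[OF e\<^sub>0 e\<^sub>1 R\<^sub>1 t\<^sub>1 this]
  show "summable (\<lambda>n. R^n * norm (c\<^sub>1 n))"
    using R close by (intro summable_powser_norm_mono[OF reexpand(1)]) auto
  show "\<forall>t\<in>{0..1}. \<bar>t - t\<^sub>1\<bar> < R \<longrightarrow> (\<Sum>n. complex_of_real (t - t\<^sub>1)^n *\<^sub>C c\<^sub>1 n) = A t"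
  proof (intro ballI impI)
    fix t assume t: "t \<in> {0..1}" "\<bar>t - t\<^sub>1\<bar> < R"
    have "(\<Sum>n. complex_of_real (t - t\<^sub>1)^n *\<^sub>C c\<^sub>1 n) = (\<Sum>n. complex_of_real (t - t\<^sub>0)^n *\<^sub>C c\<^sub>0 n)"
      using reexpand(2)[of "complex_of_real t"] t close by simp
    also have "\<dots> = A t"
    proof -
      have "\<bar>t - t\<^sub>0\<bar> < R\<^sub>0"
        using t close by linarith
      with e\<^sub>0 t(1) show ?thesis
        unfolding local_expansion_def by blast
    qed
    finally show "(\<Sum>n. complex_of_real (t - t\<^sub>1)^n *\<^sub>C c\<^sub>1 n) = A t" .
  qed
qed

lemma Lebesgue_number_balls:
  fixes K :: "'a::metric_space set"
  assumes "compact K" and \<delta>: "\<And>x. x \<in> K \<Longrightarrow> \<delta> x > 0"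
  obtains \<eta> where "\<eta> > 0" "\<And>x. x \<in> K \<Longrightarrow> \<exists>y\<in>K. ball x \<eta> \<subseteq> ball y (\<delta> y)"
proof -
  have "K \<subseteq> \<Union>((\<lambda>y. ball y (\<delta> y)) ` K)"
    using \<delta> by force
  from Heine_Borel_lemma[OF assms(1) this] that show thesis
    by auto
qed

lemma real_analytic_into_local_expansion:
  fixes A :: "real \<Rightarrow> 'a::complex_banach"
  assumes "real_analytic_into P {0..1} A" "t\<^sub>0 \<in> {0..1}"
  shows "\<exists>R>0. \<exists>c. (\<forall>n. P (c n)) \<and> local_expansion A t\<^sub>0 R c"
proof -
  from bspec[OF assms(1)[unfolded real_analytic_into_def] assms(2)]
  obtain e c where e: "e > 0" and P: "\<forall>n. P (c n)"
    and c: "\<forall>t\<in>{0..1}. \<bar>t - t\<^sub>0\<bar> < e \<longrightarrow>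
      summable (\<lambda>n. \<bar>t - t\<^sub>0\<bar>^n * norm (c n)) \<and> (\<lambda>n. (t - t\<^sub>0)^n *\<^sub>R c n) sums A t"
    by (elim exE conjE)
  define R where "R = min e 1 / 2"
  have R: "0 < R" "R < e" "R \<le> 1/2"
    using e unfolding R_def by auto
  define t where "t = (if t\<^sub>0 \<le> 1/2 then t\<^sub>0 + R else t\<^sub>0 - R)"
  have t: "t \<in> {0..1}" "\<bar>t - t\<^sub>0\<bar> = R"
    using assms(2) R unfolding t_def by auto
  have "local_expansion A t\<^sub>0 R c"
    unfolding local_expansion_def
  proof
    show "summable (\<lambda>n. R^n * norm (c n))"
      using bspec[OF c t(1)] t(2) R by simp
    show "\<forall>t\<in>{0..1}. \<bar>t - t\<^sub>0\<bar> < R \<longrightarrow> (\<Sum>n. complex_of_real (t - t\<^sub>0)^n *\<^sub>C c n) = A t"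
      using c R by (simp add: sums_iff scaleC_of_real_power del: of_real_diff)
  qed
  with R P show ?thesis
    by blast
qed

lemma uniform_local_expansions:
  fixes A :: "real \<Rightarrow> 'a::complex_banach"
  assumes "real_analytic_into P {0..1} A"
  obtains \<epsilon> c where "\<epsilon> > 0" "\<And>t n. t \<in> {0..1} \<Longrightarrow> P (c t n)"
    "\<And>t. t \<in> {0..1} \<Longrightarrow> local_expansion A t \<epsilon> (c t)"
proof -
  have "\<forall>t\<in>{0..1}. \<exists>R>0. \<exists>c. (\<forall>n. P (c n)) \<and> local_expansion A t R c"
    using real_analytic_into_local_expansion[OF assms] by blast
  from bchoice[OF this] obtain R
    where R': "\<forall>t\<in>{0..1}. R t > 0 \<and> (\<exists>c. (\<forall>n. P (c n)) \<and> local_expansion A t (R t) c)"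
    by blast
  then have R: "\<And>t. t \<in> {0..1} \<Longrightarrow> R t > 0" and
    "\<forall>t\<in>{0..1}. \<exists>c. (\<forall>n. P (c n)) \<and> local_expansion A t (R t) c"
    by auto
  from bchoice[OF this(2)] obtain c
    where c: "\<forall>t\<in>{0..1}. (\<forall>n. P (c t n)) \<and> local_expansion A t (R t) (c t)"
    by blast
  then have P: "\<And>t n. t \<in> {0..1} \<Longrightarrow> P (c t n)"
    and e: "\<And>t. t \<in> {0..1} \<Longrightarrow> local_expansion A t (R t) (c t)"
    by auto
  obtain \<epsilon> where \<epsilon>: "\<epsilon> > 0"
    and cover: "\<And>t. t \<in> {0..1} \<Longrightarrow> \<exists>t\<^sub>0\<in>{0..1}. ball t \<epsilon> \<subseteq> ball t\<^sub>0 (R t\<^sub>0 / 2)"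
  proof (rule Lebesgue_number_balls[of "{0..1}" "\<lambda>t. R t / 2"])
    show "R t / 2 > 0" if "t \<in> {0..1}" for t
      using R[OF that] by simp
  qed (auto intro: that)
  have expansion: "local_expansion A t \<epsilon> (c t)" if t: "t \<in> {0..1}" for t
  proof -
    obtain t\<^sub>0 where "t\<^sub>0 \<in> {0..1}" "ball t \<epsilon> \<subseteq> ball t\<^sub>0 (R t\<^sub>0 / 2)"
      using cover[OF t] by blast
    then have t\<^sub>0: "t\<^sub>0 \<in> {0..1}" "\<bar>t - t\<^sub>0\<bar> + \<epsilon> \<le> R t\<^sub>0 / 2"
      using \<epsilon> by (simp_all add: ball_subset_ball_iff dist_real_def)
    show ?thesis
      by (rule local_expansion_recentre[OF e[OF t\<^sub>0(1)] e[OF t] R[OF t] t \<epsilon>])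
        (use t\<^sub>0 R[OF t\<^sub>0(1)] in linarith)
  qed
  show thesis
    by (rule that[OF \<epsilon> P expansion])
qed

section \<open>Analytic extension to a tube\<close>

definition clamp01 :: "complex \<Rightarrow> real"
  where "clamp01 z = max 0 (min 1 (Re z))"

lemma clamp01_in: "clamp01 z \<in> {0..1}"
  unfolding clamp01_def by auto

lemma clamp01_of_real: "t \<in> {0..1} \<Longrightarrow> clamp01 (complex_of_real t) = t"
  unfolding clamp01_def by auto

lemma clamp01_lipschitz: "\<bar>clamp01 z - clamp01 w\<bar> \<le> cmod (z - w)"
proof -
  have "\<bar>clamp01 z - clamp01 w\<bar> \<le> \<bar>Re (z - w)\<bar>"
    unfolding clamp01_def by (auto simp: max_def min_def abs_if)
  also have "\<dots> \<le> cmod (z - w)"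
    by (rule abs_Re_le_cmod)
  finally show ?thesis .
qed

lemma clamp01_nearest:
  assumes "t \<in> {0..1}"
  shows "cmod (z - complex_of_real (clamp01 z)) \<le> cmod (z - complex_of_real t)"
proof -
  have "(Re z - clamp01 z)^2 \<le> (Re z - t)^2"
    using assms unfolding clamp01_def by (auto simp: abs_le_square_iff[symmetric] max_def min_def abs_if)
  then have "cmod (z - complex_of_real (clamp01 z))^2 \<le> cmod (z - complex_of_real t)^2"
    by (simp add: cmod_power2)
  then show ?thesis
    by (rule power2_le_imp_le) simp
qed

definition tube :: "real \<Rightarrow> complex set"
  where "tube \<rho> = (\<Union>x\<in>complex_of_real ` {0..1}. \<Union>y\<in>ball 0 \<rho>. {x + y})"

lemma convex_tube: "convex (tube \<rho>)"
  unfolding tube_def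
  by (intro convex_sums convex_linear_image[OF bounded_linear.linear[OF bounded_linear_of_real]])
    auto

lemma open_tube: "open (tube \<rho>)"
  unfolding tube_def by (rule open_sums) simp

lemma mem_tube: "z \<in> tube \<rho> \<longleftrightarrow> (\<exists>t\<in>{0..1}. cmod (z - complex_of_real t) < \<rho>)"
  unfolding tube_def by (force simp: dist_norm)

lemma unit_interval_subset_tube: "\<rho> > 0 \<Longrightarrow> complex_of_real ` {0..1} \<subseteq> tube \<rho>"
  by (force simp: mem_tube)

lemma tube_mono: "\<rho> \<le> \<rho>' \<Longrightarrow> tube \<rho> \<subseteq> tube \<rho>'"
  unfolding subset_iff mem_tube by (meson less_le_trans)

lemma clamp01_tube: "z \<in> tube \<rho> \<Longrightarrow> cmod (z - complex_of_real (clamp01 z)) < \<rho>"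
  unfolding mem_tube using clamp01_nearest by (meson le_less_trans)

lemma tube_Lebesgue_number:
  assumes "\<And>t. t \<in> {0..1} \<Longrightarrow> \<delta> t > 0"
  obtains \<rho> where "\<rho> > 0" "\<And>z. z \<in> tube \<rho> \<Longrightarrow> \<exists>t\<in>{0..1}. cmod (z - complex_of_real t) < \<delta> t"
proof -
  obtain \<rho> where \<rho>: "\<rho> > 0" and cover: "\<And>t'. t' \<in> {0..1} \<Longrightarrow> \<exists>t\<in>{0..1}. ball t' \<rho> \<subseteq> ball t (\<delta> t)"
    by (rule Lebesgue_number_balls[of "{0..1}" \<delta>]) (use assms in \<open>auto intro: that\<close>)
  show thesis
  proof (rule that[OF \<rho>])
    fix z assume "z \<in> tube \<rho>"
    then obtain t' where t': "t' \<in> {0..1}" "cmod (z - complex_of_real t') < \<rho>"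
      unfolding mem_tube by blast
    obtain t where "t \<in> {0..1}" "ball t' \<rho> \<subseteq> ball t (\<delta> t)"
      using cover[OF t'(1)] by blast
    then have t: "t \<in> {0..1}" "\<bar>t' - t\<bar> + \<rho> \<le> \<delta> t"
      using \<rho> by (simp_all add: ball_subset_ball_iff dist_real_def)
    have "cmod (z - complex_of_real t) \<le> cmod (z - complex_of_real t') + \<bar>t' - t\<bar>"
      using norm_triangle_ineq[of "z - complex_of_real t'" "complex_of_real t' - complex_of_real t"]
      by simp
    with t' t show "\<exists>t\<in>{0..1}. cmod (z - complex_of_real t) < \<delta> t"
      by (intro bexI[OF _ t(1)]) linarith
  qed
qed

definition interval_extension :: "(real \<Rightarrow> nat \<Rightarrow> 'a::complex_banach) \<Rightarrow> complex \<Rightarrow> 'a"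
  where "interval_extension c z = (\<Sum>n. (z - complex_of_real (clamp01 z))^n *\<^sub>C c (clamp01 z) n)"

locale interval_expansion =
  fixes A :: "real \<Rightarrow> 'a::complex_banach" and \<epsilon> :: real and c :: "real \<Rightarrow> nat \<Rightarrow> 'a"
  assumes eps_pos: "\<epsilon> > 0"
    and expansion: "\<And>t. t \<in> {0..1} \<Longrightarrow> local_expansion A t \<epsilon> (c t)"
begin

lemma summable_coeffs: "t \<in> {0..1} \<Longrightarrow> summable (\<lambda>n. \<epsilon>^n * norm (c t n))"
  using expansion unfolding local_expansion_def by blast

lemma coeff_zero: "t \<in> {0..1} \<Longrightarrow> c t 0 = A t"
  by (rule local_expansion_at_centre[OF expansion eps_pos])

lemma extension_eq:
  assumes t: "t \<in> {0..1}" and z: "2 * cmod (z - complex_of_real t) \<le> \<epsilon>"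
  shows "interval_extension c z = (\<Sum>n. (z - complex_of_real t)^n *\<^sub>C c t n)"
proof -
  let ?t' = "clamp01 z"
  have "\<bar>?t' - t\<bar> \<le> cmod (z - complex_of_real t)"
    using clamp01_lipschitz[of z "complex_of_real t"] by (simp add: clamp01_of_real[OF t])
  moreover have "cmod (z - complex_of_real ?t') \<le> cmod (z - complex_of_real t)"
    by (rule clamp01_nearest[OF t])
  ultimately show ?thesis
    unfolding interval_extension_def using z eps_pos
    by (intro local_expansion_reexpand(2)[OF expansion[OF t] expansion[OF clamp01_in] eps_pos clamp01_in])
      auto
qed

lemma extension_of_real: "t \<in> {0..1} \<Longrightarrow> interval_extension c (complex_of_real t) = A t"
  using extension_eq[of t "complex_of_real t"] eps_pos by (simp add: powser_at_zero coeff_zero)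

lemma norm_extension_diff_le:
  assumes t: "t \<in> {0..1}" and z: "2 * cmod (z - complex_of_real t) \<le> \<epsilon>"
  shows "norm (interval_extension c z - A t) \<le> cmod (z - complex_of_real t) / \<epsilon> * (\<Sum>n. \<epsilon>^n * norm (c t n))"
  unfolding extension_eq[OF assms] coeff_zero[OF t, symmetric] using z eps_pos
  by (intro norm_powser_diff_const_le[OF eps_pos summable_coeffs[OF t]]) auto

end

lemma complex_analytic_op_subset:
  "complex_analytic_op V f \<Longrightarrow> U \<subseteq> V \<Longrightarrow> complex_analytic_op U f"
  unfolding complex_analytic_op_def by (meson subsetD)

lemma complex_analytic_op_interval_extension:
  fixes A :: "real \<Rightarrow> 'd::complex_banach \<Rightarrow>\<^sub>L 'x::complex_banach"
  assumes "interval_expansion A \<epsilon> c" and clin: "\<And>t n. t \<in> {0..1} \<Longrightarrow> clin (c t n)"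
  shows "complex_analytic_op (tube (\<epsilon> / 4)) (interval_extension c)"
  unfolding complex_analytic_op_def
proof
  interpret interval_expansion A \<epsilon> c by fact
  fix z\<^sub>0 assume z\<^sub>0: "z\<^sub>0 \<in> tube (\<epsilon> / 4)"
  define t\<^sub>0 where "t\<^sub>0 = clamp01 z\<^sub>0"
  define a where "a = z\<^sub>0 - complex_of_real t\<^sub>0"
  have t\<^sub>0: "t\<^sub>0 \<in> {0..1}" and a: "cmod a < \<epsilon> / 4"
    using clamp01_in clamp01_tube[OF z\<^sub>0] unfolding t\<^sub>0_def a_def by auto
  define d where "d m = (\<Sum>n. (of_nat (n choose m) * a^(n - m)) *\<^sub>C c t\<^sub>0 n)" for m
  note reexpand = powser_reexpand[OF summable_coeffs[OF t\<^sub>0], of a, folded d_def]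
  show "\<exists>e>0. \<exists>d. (\<forall>n. clin (d n)) \<and> (\<forall>z\<in>tube (\<epsilon> / 4). cmod (z - z\<^sub>0) < e \<longrightarrow>
      summable (\<lambda>n. cmod (z - z\<^sub>0)^n * norm (d n)) \<and>
      (\<lambda>n. cscale ((z - z\<^sub>0)^n) (d n)) sums interval_extension c z)"
  proof (intro exI conjI allI ballI impI)
    show "\<epsilon> / 4 > 0"
      using eps_pos by simp
    show "clin (d m)" for m
    proof -
      have "summable (\<lambda>n. norm ((of_nat (n choose m) * a^(n - m)) *\<^sub>C c t\<^sub>0 n))"
        using summable_binomial_powser[OF summable_coeffs[OF t\<^sub>0], of "cmod a" m] a eps_pos
        by (simp add: norm_scaleC norm_mult norm_power)
      then show ?thesis
        unfolding d_def by (intro clin_suminf[OF summable_norm_cancel] clin_scaleC clin[OF t\<^sub>0])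
    qed
    fix z assume z: "cmod (z - z\<^sub>0) < \<epsilon> / 4"
    then have close: "cmod a < \<epsilon>" "cmod a + cmod (z - z\<^sub>0) \<le> \<epsilon>"
      using a norm_ge_zero[of a] by linarith+
    show "summable (\<lambda>n. cmod (z - z\<^sub>0)^n * norm (d n))"
      by (rule reexpand(1)[OF close])
    have sum: "a + (z - z\<^sub>0) = z - complex_of_real t\<^sub>0"
      unfolding a_def by simp
    have "2 * cmod (z - complex_of_real t\<^sub>0) \<le> \<epsilon>"
      using z a norm_triangle_ineq[of a "z - z\<^sub>0"] unfolding a_def by simp
    then show "(\<lambda>n. cscale ((z - z\<^sub>0)^n) (d n)) sums interval_extension c z"
      using reexpand(2)[OF close] unfolding sum by (simp add: cscale_eq_scaleC extension_eq[OF t\<^sub>0])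
  qed
qed

lemma in_S_interval_extension_near:
  fixes j :: "'d::complex_banach \<Rightarrow>\<^sub>L 'x::complex_banach" and A :: "real \<Rightarrow> 'd \<Rightarrow>\<^sub>L 'x"
  assumes "interval_expansion A \<epsilon> c" and clin: "\<And>n. clin (c t n)" and t: "t \<in> {0..1}"
    and S: "in_S j M r \<theta> (A t)" and M: "M \<ge> 0" and K: "K \<ge> 0" "\<And>d. norm d \<le> K * norm (A t d)"
    and z: "2 * cmod (z - complex_of_real t) \<le> \<epsilon>"
    and small: "cmod (z - complex_of_real t) / \<epsilon> * (\<Sum>n. \<epsilon>^n * norm (c t n)) * (K * (M + 1)) \<le> 1/2"
  shows "in_S j (2 * M) r \<theta> (interval_extension c z)"
proof -
  interpret interval_expansion A \<epsilon> c by fact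
  have "norm (interval_extension c z - A t) * (K * (M + 1))
      \<le> cmod (z - complex_of_real t) / \<epsilon> * (\<Sum>n. \<epsilon>^n * norm (c t n)) * (K * (M + 1))"
    using K M by (intro mult_right_mono[OF norm_extension_diff_le[OF t z]]) simp
  also note small
  finally have "norm (interval_extension c z - A t) * (K * (M + 1)) \<le> 1/2" .
  moreover have "clin (interval_extension c z)"
    unfolding extension_eq[OF t z] using z eps_pos
    by (intro clin_summable_powser clin summable_powser_norm_mono[OF summable_coeffs[OF t]]) auto
  ultimately show ?thesis
    by (intro in_S_perturbation[OF S M K]) 
qed

text \<open>The admissible distance to \<open>t\<close> in the previous lemma depends on \<open>t\<close>;
  a Lebesgue number makes it uniform.\<close>

lemma in_S_interval_extension:
  fixes j :: "'d::complex_banach \<Rightarrow>\<^sub>L 'x::complex_banach" and A :: "real \<Rightarrow> 'd \<Rightarrow>\<^sub>L 'x"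
  assumes ie: "interval_expansion A \<epsilon> c" and clin: "\<And>t n. t \<in> {0..1} \<Longrightarrow> clin (c t n)"
    and M: "M \<ge> 0" and A_S: "\<And>t. t \<in> {0..1} \<Longrightarrow> in_S j M r \<theta> (A t)" and zero: "0 \<in> sector r \<theta>"
  obtains \<rho> where "\<rho> > 0" "\<And>z. z \<in> tube \<rho> \<Longrightarrow> in_S j (2 * M) r \<theta> (interval_extension c z)"
proof -
  interpret interval_expansion A \<epsilon> c by fact
  have "\<forall>t\<in>{0..1}. \<exists>K\<ge>0. \<forall>d. norm d \<le> K * norm (A t d)"
    using in_S_bounded_below(2)[OF A_S zero] by blast
  from bchoice[OF this] obtain K
    where K: "\<forall>t\<in>{0..1}. K t \<ge> 0 \<and> (\<forall>d. norm d \<le> K t * norm (A t d))"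
    by blast
  define Q where "Q t = (\<Sum>n. \<epsilon>^n * norm (c t n)) * (K t * (M + 1))" for t
  have Q: "Q t \<ge> 0" if "t \<in> {0..1}" for t
    unfolding Q_def using that K M eps_pos by (auto intro!: mult_nonneg_nonneg suminf_nonneg summable_coeffs)
  define \<delta> where "\<delta> t = \<epsilon> / (2 * (Q t + 1))" for t
  have near: "in_S j (2 * M) r \<theta> (interval_extension c z)"
    if t: "t \<in> {0..1}" and z: "cmod (z - complex_of_real t) < \<delta> t" for t z
  proof (rule in_S_interval_extension_near[OF ie clin t A_S[OF t] M])
    show "K t \<ge> 0" "norm d \<le> K t * norm (A t d)" for d
      using K t by auto
    have "\<delta> t \<le> \<epsilon> / 2"
      unfolding \<delta>_def using Q[OF t] eps_pos by (simp add: field_simps)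
    then show "2 * cmod (z - complex_of_real t) \<le> \<epsilon>"
      using z by simp
    have "cmod (z - complex_of_real t) / \<epsilon> * Q t \<le> \<delta> t / \<epsilon> * Q t"
      using z eps_pos Q[OF t] by (intro mult_right_mono divide_right_mono) auto
    also have "\<dots> = Q t / (2 * (Q t + 1))"
      unfolding \<delta>_def using eps_pos by simp
    also have "\<dots> \<le> 1/2"
      using Q[OF t] by (simp add: pos_divide_le_eq)
    finally show "cmod (z - complex_of_real t) / \<epsilon> * (\<Sum>n. \<epsilon>^n * norm (c t n)) * (K t * (M + 1)) \<le> 1/2"
      by (simp add: Q_def mult.assoc)
  qed (use t in auto)
  obtain \<rho> where \<rho>: "\<rho> > 0"
    and cover: "\<And>z. z \<in> tube \<rho> \<Longrightarrow> \<exists>t\<in>{0..1}. cmod (z - complex_of_real t) < \<delta> t"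
  proof (rule tube_Lebesgue_number[of \<delta>])
    show "\<delta> t > 0" if "t \<in> {0..1}" for t
      unfolding \<delta>_def using Q[OF that] eps_pos by simp
  qed (auto intro: that)
  show thesis
  proof (rule that[OF \<rho>])
    fix z assume "z \<in> tube \<rho>"
    then obtain t where "t \<in> {0..1}" "cmod (z - complex_of_real t) < \<delta> t"
      using cover by blast
    then show "in_S j (2 * M) r \<theta> (interval_extension c z)"
      by (rule near)
  qed
qed

lemma extension_in_S:
  fixes j :: "'d::complex_banach \<Rightarrow>\<^sub>L 'x::complex_banach" and A :: "real \<Rightarrow> 'd \<Rightarrow>\<^sub>L 'x"
  assumes ie: "interval_expansion A \<epsilon> c" and clin: "\<And>t n. t \<in> {0..1} \<Longrightarrow> clin (c t n)"
    and M: "M \<ge> 0" and A_S: "\<And>t. t \<in> {0..1} \<Longrightarrow> in_S j M r \<theta> (A t)" and zero: "0 \<in> sector r \<theta>"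
  shows "\<exists>U B. convex U \<and> open U \<and> complex_of_real ` {0..1} \<subseteq> U \<and>
    (\<forall>t\<in>{0..1}. B (complex_of_real t) = A t) \<and> complex_analytic_op U B \<and>
    (\<forall>z\<in>U. in_S j (2 * M) r \<theta> (B z))"
proof -
  interpret interval_expansion A \<epsilon> c by fact
  obtain \<rho> where \<rho>: "\<rho> > 0" and B_S: "\<And>z. z \<in> tube \<rho> \<Longrightarrow> in_S j (2 * M) r \<theta> (interval_extension c z)"
    by (rule in_S_interval_extension[OF ie clin M A_S zero]) (auto intro: that)
  let ?U = "tube (min \<rho> (\<epsilon> / 4))"
  have "convex ?U" "open ?U" "complex_of_real ` {0..1} \<subseteq> ?U"
    using \<rho> eps_pos by (simp_all add: convex_tube open_tube unit_interval_subset_tube)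
  moreover have "complex_analytic_op ?U (interval_extension c)"
    by (rule complex_analytic_op_subset[OF complex_analytic_op_interval_extension[OF ie clin]
          tube_mono[OF min.cobounded2]])
  moreover have "\<forall>z\<in>?U. in_S j (2 * M) r \<theta> (interval_extension c z)"
    using B_S tube_mono[OF min.cobounded1] by blast
  moreover have "\<forall>t\<in>{0..1}. interval_extension c (complex_of_real t) = A t"
    using extension_of_real by blast
  ultimately show ?thesis
    by blast
qed

section \<open>Inverse of an operator-valued power series\<close>

lemma invertible_blinfun:
  fixes T :: "'d::complex_banach \<Rightarrow>\<^sub>L 'x::complex_banach"
  assumes bij: "bij (blinfun_apply T)" and K: "\<And>d. norm d \<le> K * norm (T d)" and clin: "clin T"
  obtains S where "\<And>d. blinfun_apply S (T d) = d" "\<And>x. T (blinfun_apply S x) = x" "clin S"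
proof -
  let ?S = "inv (blinfun_apply T)"
  have TS: "T (?S x) = x" and ST: "?S (T d) = d" for x d
    using bij by (simp_all add: bij_is_surj surj_f_inv_f bij_is_inj inv_f_f)
  have eq: "d = d'" if "T d = T d'" for d d'
    using ST that by metis
  have lin: "linear ?S"
    by (rule linear_inv_bij[OF bounded_linear.linear[OF blinfun.bounded_linear_right] bij])
  have "bounded_linear ?S"
    by (rule bounded_linear_intro[where K=K])
      (use K[of "?S _"] in \<open>simp_all add: TS mult.commute linear_add[OF lin] linear_scale[OF lin]\<close>)
  then have S: "blinfun_apply (Blinfun ?S) = ?S"
    by (rule bounded_linear_Blinfun_apply)
  show thesis
  proof (rule that[of "Blinfun ?S"])
    show "clin (Blinfun ?S)"
      unfolding clin_def S by (intro allI eq) (simp add: TS clinD[OF clin])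
  qed (simp_all add: S TS ST)
qed

text \<open>Coefficients \<open>g n\<close> of the inverse of \<open>\<Sum>n. h\<^sup>n c n\<close> when \<open>G\<close> is a right inverse of \<open>c 0\<close>:
  the recursion solves \<open>(\<Sum>i\<le>n. c i \<circ> g (n - i)) = 0\<close> for \<open>n > 0\<close>.\<close>

fun inverse_coeffs :: "('x::real_normed_vector \<Rightarrow>\<^sub>L 'd::real_normed_vector) \<Rightarrow> (nat \<Rightarrow> 'd \<Rightarrow>\<^sub>L 'x) \<Rightarrow> nat \<Rightarrow> 'x \<Rightarrow>\<^sub>L 'd"
  where
    "inverse_coeffs G c 0 = G"
  | "inverse_coeffs G c (Suc n) = - (G o\<^sub>L (\<Sum>k\<le>n. c (Suc k) o\<^sub>L inverse_coeffs G c (n - k)))"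

lemma clin_inverse_coeffs:
  assumes "clin G" "\<And>n. clin (c n)"
  shows "clin (inverse_coeffs G c n)"
proof (induction n rule: less_induct)
  case (less n)
  then show ?case
    using assms by (cases n) (auto intro!: clin_minus clin_compose clin_sum)
qed

lemma Cauchy_product_inverse_coeffs:
  assumes G: "\<And>x. blinfun_apply (c 0) (blinfun_apply G x) = x"
  shows "(\<Sum>i\<le>n. c i o\<^sub>L inverse_coeffs G c (n - i)) = (if n = 0 then id_blinfun else 0)"
proof (cases n)
  case (Suc m)
  let ?S = "\<Sum>k\<le>m. c (Suc k) o\<^sub>L inverse_coeffs G c (m - k)"
  have "(\<Sum>i\<le>Suc m. c i o\<^sub>L inverse_coeffs G c (Suc m - i)) = (c 0 o\<^sub>L inverse_coeffs G c (Suc m)) + ?S"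
    by (subst sum.atMost_Suc_shift) simp
  also have "c 0 o\<^sub>L inverse_coeffs G c (Suc m) = - ?S"
    by (rule blinfun_eqI) (simp add: blinfun.minus_left blinfun.minus_right G)
  finally show ?thesis
    using Suc by simp
qed (auto intro!: blinfun_eqI simp: G)

lemma norm_inverse_coeffs_Suc_le:
  assumes \<epsilon>: "\<epsilon> \<ge> 0"
  shows "norm (inverse_coeffs G c (Suc m)) * \<epsilon>^Suc m \<le>
    norm G * (\<Sum>k\<le>m. (norm (c (Suc k)) * \<epsilon>^Suc k) * (norm (inverse_coeffs G c (m - k)) * \<epsilon>^(m - k)))"
proof -
  let ?g = "inverse_coeffs G c"
  have "norm (?g (Suc m)) \<le> norm G * norm (\<Sum>k\<le>m. c (Suc k) o\<^sub>L ?g (m - k))"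
    using norm_blinfun_compose by simp
  also have "\<dots> \<le> norm G * (\<Sum>k\<le>m. norm (c (Suc k)) * norm (?g (m - k)))"
    by (intro mult_left_mono order_trans[OF norm_sum sum_mono[OF norm_blinfun_compose]]) simp_all
  finally have "norm (?g (Suc m)) * \<epsilon>^Suc m
      \<le> norm G * (\<Sum>k\<le>m. norm (c (Suc k)) * norm (?g (m - k))) * \<epsilon>^Suc m"
    by (rule mult_right_mono) (use \<epsilon> in simp)
  also have "\<dots> = norm G * (\<Sum>k\<le>m. norm (c (Suc k)) * norm (?g (m - k)) * \<epsilon>^Suc m)"
    by (simp add: sum_distrib_right mult.assoc)
  also have "(\<Sum>k\<le>m. norm (c (Suc k)) * norm (?g (m - k)) * \<epsilon>^Suc m)
      = (\<Sum>k\<le>m. (norm (c (Suc k)) * \<epsilon>^Suc k) * (norm (?g (m - k)) * \<epsilon>^(m - k)))"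
  proof (rule sum.cong[OF refl])
    fix k assume "k \<in> {..m}"
    then have "\<epsilon>^Suc m = \<epsilon>^Suc k * \<epsilon>^(m - k)"
      by (simp flip: power_add)
    then show "norm (c (Suc k)) * norm (?g (m - k)) * \<epsilon>^Suc m
        = (norm (c (Suc k)) * \<epsilon>^Suc k) * (norm (?g (m - k)) * \<epsilon>^(m - k))"
      by (simp only: mult_ac)
  qed
  finally show ?thesis .
qed

lemma norm_inverse_coeffs_le:
  assumes \<epsilon>: "\<epsilon> > 0" and C: "C \<ge> 0" and c: "\<And>k. norm (c k) * \<epsilon>^k \<le> C"
  shows "norm (inverse_coeffs G c n) * \<epsilon>^n \<le> norm G * (1 + norm G * C)^n"
proof (induction n rule: less_induct)
  case (less n)
  let ?\<gamma> = "1 + norm G * C" and ?g = "inverse_coeffs G c"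
  show ?case
  proof (cases n)
    case (Suc m)
    have "norm (?g n) * \<epsilon>^n
        \<le> norm G * (\<Sum>k\<le>m. (norm (c (Suc k)) * \<epsilon>^Suc k) * (norm (?g (m - k)) * \<epsilon>^(m - k)))"
      unfolding Suc using \<epsilon> by (intro norm_inverse_coeffs_Suc_le) simp
    also have "\<dots> \<le> norm G * (\<Sum>k\<le>m. C * (norm G * ?\<gamma>^(m - k)))"
    proof (intro mult_left_mono sum_mono)
      fix k assume "k \<in> {..m}"
      then have "norm (?g (m - k)) * \<epsilon>^(m - k) \<le> norm G * ?\<gamma>^(m - k)"
        using less Suc by simp
      then show "norm (c (Suc k)) * \<epsilon>^Suc k * (norm (?g (m - k)) * \<epsilon>^(m - k)) \<le> C * (norm G * ?\<gamma>^(m - k))"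
        using C \<epsilon> by (intro mult_mono[OF c]) auto
    qed simp
    also have "(\<Sum>k\<le>m. C * (norm G * ?\<gamma>^(m - k))) = (?\<gamma> - 1) * (\<Sum>k\<le>m. ?\<gamma>^(m - k))"
      by (simp add: sum_distrib_left mult_ac)
    also have "\<dots> = ?\<gamma>^n - 1"
      using one_diff_power_eq'[of ?\<gamma> "Suc m"] Suc by (simp add: lessThan_Suc_atMost algebra_simps)
    also have "norm G * (?\<gamma>^n - 1) \<le> norm G * ?\<gamma>^n"
      by (intro mult_left_mono) auto
    finally show ?thesis .
  qed simp
qed

lemma summable_inverse_coeffs:
  fixes c :: "nat \<Rightarrow> 'd::banach \<Rightarrow>\<^sub>L 'x::banach" and G :: "'x \<Rightarrow>\<^sub>L 'd"
  assumes S: "summable (\<lambda>n. \<epsilon>^n * norm (c n))" and \<epsilon>: "\<epsilon> > 0"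
    and h: "\<bar>h\<bar> \<le> \<epsilon> / (2 * (1 + norm G * (\<Sum>n. \<epsilon>^n * norm (c n))))"
  shows "summable (\<lambda>n. \<bar>h\<bar>^n * norm (inverse_coeffs G c n))"
proof -
  let ?g = "inverse_coeffs G c"
  define C where "C = (\<Sum>n. \<epsilon>^n * norm (c n))"
  define \<gamma> where "\<gamma> = 1 + norm G * C"
  have C: "C \<ge> 0"
    unfolding C_def using \<epsilon> by (intro suminf_nonneg[OF S]) simp
  then have \<gamma>: "\<gamma> \<ge> 1"
    unfolding \<gamma>_def by simp
  have "norm (c k) * \<epsilon>^k \<le> C" for k
    using sum_le_suminf[OF S, of "{k}"] \<epsilon> unfolding C_def by (simp add: mult.commute)
  then have g: "norm (?g n) * \<epsilon>^n \<le> norm G * \<gamma>^n" for n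
    unfolding \<gamma>_def by (rule norm_inverse_coeffs_le[OF \<epsilon> C])
  show ?thesis
  proof (rule summable_comparison_test'[OF summable_mult[OF summable_geometric[of "1/2"]]], simp)
    fix n
    have "\<bar>h\<bar>^n * norm (?g n) \<le> (\<epsilon> / (2 * \<gamma>))^n * norm (?g n)"
      using h unfolding C_def[symmetric] \<gamma>_def[symmetric] by (intro mult_right_mono power_mono) auto
    also have "\<dots> = (norm (?g n) * \<epsilon>^n) / (2 * \<gamma>)^n"
      by (simp add: power_divide)
    also have "\<dots> \<le> (norm G * \<gamma>^n) / (2 * \<gamma>)^n"
      using \<gamma> by (intro divide_right_mono g) simp
    also have "\<dots> = norm G * (1/2)^n"
      using \<gamma> by (simp add: power_mult_distrib power_divide)
    finally show "norm (\<bar>h\<bar>^n * norm (?g n)) \<le> norm G * (1/2)^n"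
      by simp
  qed
qed

lemma powser_inverse:
  fixes c :: "nat \<Rightarrow> 'd::banach \<Rightarrow>\<^sub>L 'x::banach" and G :: "'x \<Rightarrow>\<^sub>L 'd"
  assumes G: "\<And>x. blinfun_apply (c 0) (blinfun_apply G x) = x"
    and "summable (\<lambda>n. norm (h^n *\<^sub>R c n))" "summable (\<lambda>n. norm (h^n *\<^sub>R inverse_coeffs G c n))"
  shows "(\<Sum>n. h^n *\<^sub>R c n) o\<^sub>L (\<Sum>n. h^n *\<^sub>R inverse_coeffs G c n) = id_blinfun"
proof -
  let ?g = "inverse_coeffs G c"
  have "(\<lambda>n. \<Sum>i\<le>n. h^i *\<^sub>R c i o\<^sub>L h^(n - i) *\<^sub>R ?g (n - i))
      sums ((\<Sum>n. h^n *\<^sub>R c n) o\<^sub>L (\<Sum>n. h^n *\<^sub>R ?g n))"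
    using assms(2,3) by (rule Cauchy_product_sums_bilinear[OF bounded_bilinear_blinfun_compose])
  moreover have "(\<Sum>i\<le>n. h^i *\<^sub>R c i o\<^sub>L h^(n - i) *\<^sub>R ?g (n - i)) = (if n = 0 then id_blinfun else 0)" for n
  proof -
    have "(\<Sum>i\<le>n. h^i *\<^sub>R c i o\<^sub>L h^(n - i) *\<^sub>R ?g (n - i)) = h^n *\<^sub>R (\<Sum>i\<le>n. c i o\<^sub>L ?g (n - i))"
      unfolding scaleR_sum_right
    proof (rule sum.cong[OF refl])
      fix i assume "i \<in> {..n}"
      then have "h^(n - i) * h^i = h^n"
        by (simp flip: power_add)
      then show "h^i *\<^sub>R c i o\<^sub>L h^(n - i) *\<^sub>R ?g (n - i) = h^n *\<^sub>R (c i o\<^sub>L ?g (n - i))"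
        by (simp add: bounded_bilinear.scaleR_left[OF bounded_bilinear_blinfun_compose]
            bounded_bilinear.scaleR_right[OF bounded_bilinear_blinfun_compose])
    qed
    then show ?thesis
      by (simp add: Cauchy_product_inverse_coeffs[of c G, OF G])
  qed
  ultimately have "(\<lambda>n. if n = 0 then id_blinfun else 0) sums ((\<Sum>n. h^n *\<^sub>R c n) o\<^sub>L (\<Sum>n. h^n *\<^sub>R ?g n))"
    by simp
  then show ?thesis
    using sums_single[of 0 "\<lambda>_. id_blinfun :: 'x \<Rightarrow>\<^sub>L 'x"] sums_unique2 by fastforce
qed

lemma real_analytic_inverse:
  fixes A :: "real \<Rightarrow> 'd::complex_banach \<Rightarrow>\<^sub>L 'x::complex_banach" and Ainv :: "real \<Rightarrow> 'x \<Rightarrow>\<^sub>L 'd"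
  assumes "interval_expansion A \<epsilon> c" and clin: "\<And>t n. t \<in> {0..1} \<Longrightarrow> clin (c t n)"
    and left: "\<And>t d. t \<in> {0..1} \<Longrightarrow> Ainv t (A t d) = d"
    and right: "\<And>t x. t \<in> {0..1} \<Longrightarrow> A t (Ainv t x) = x"
    and clin_inv: "\<And>t. t \<in> {0..1} \<Longrightarrow> clin (Ainv t)"
  shows "real_analytic_into clin {0..1} Ainv"
  unfolding real_analytic_into_def
proof
  interpret interval_expansion A \<epsilon> c by fact
  fix t\<^sub>0 :: real assume t\<^sub>0: "t\<^sub>0 \<in> {0..1}"
  define C where "C = (\<Sum>n. \<epsilon>^n * norm (c t\<^sub>0 n))"
  have C: "C \<ge> 0"
    unfolding C_def using eps_pos by (intro suminf_nonneg[OF summable_coeffs[OF t\<^sub>0]]) simp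
  let ?\<rho> = "\<epsilon> / (2 * (1 + norm (Ainv t\<^sub>0) * C))"
  let ?g = "inverse_coeffs (Ainv t\<^sub>0) (c t\<^sub>0)"
  have G: "c t\<^sub>0 0 (Ainv t\<^sub>0 x) = x" for x
    using right[OF t\<^sub>0] by (simp add: coeff_zero[OF t\<^sub>0])
  show "\<exists>e>0. \<exists>g. (\<forall>n. clin (g n)) \<and> (\<forall>t\<in>{0..1}. \<bar>t - t\<^sub>0\<bar> < e \<longrightarrow>
      summable (\<lambda>n. \<bar>t - t\<^sub>0\<bar>^n * norm (g n)) \<and> (\<lambda>n. (t - t\<^sub>0)^n *\<^sub>R g n) sums Ainv t)"
  proof (intro exI conjI allI ballI impI)
    show "?\<rho> > 0"
      using eps_pos C by (simp add: add_pos_nonneg)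
    show "clin (?g n)" for n
      using clin_inv[OF t\<^sub>0] clin[OF t\<^sub>0] by (rule clin_inverse_coeffs)
    fix t assume t: "t \<in> {0..1}" and close: "\<bar>t - t\<^sub>0\<bar> < ?\<rho>"
    show summable: "summable (\<lambda>n. \<bar>t - t\<^sub>0\<bar>^n * norm (?g n))"
      using close unfolding C_def by (intro summable_inverse_coeffs[OF summable_coeffs[OF t\<^sub>0] eps_pos]) simp
    have "?\<rho> \<le> \<epsilon> / 2"
      using eps_pos C by (intro divide_left_mono) (auto intro: add_pos_nonneg)
    then have "\<bar>t - t\<^sub>0\<bar> < \<epsilon>"
      using close eps_pos by linarith
    then have A_t: "(\<Sum>n. (t - t\<^sub>0)^n *\<^sub>R c t\<^sub>0 n) = A t"
      and summable_c: "summable (\<lambda>n. norm ((t - t\<^sub>0)^n *\<^sub>R c t\<^sub>0 n))"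
      using expansion[OF t\<^sub>0] t summable_powser_norm_mono[OF summable_coeffs[OF t\<^sub>0], of "\<bar>t - t\<^sub>0\<bar>"]
      unfolding local_expansion_def by (simp_all add: scaleC_of_real_power power_abs del: of_real_diff)
    have summable': "summable (\<lambda>n. norm ((t - t\<^sub>0)^n *\<^sub>R ?g n))"
      using summable by (simp add: power_abs)
    have "A t o\<^sub>L (\<Sum>n. (t - t\<^sub>0)^n *\<^sub>R ?g n) = id_blinfun"
      using powser_inverse[of "c t\<^sub>0" "Ainv t\<^sub>0" "t - t\<^sub>0", OF G summable_c summable'] A_t by simp
    then have "A t ((\<Sum>n. (t - t\<^sub>0)^n *\<^sub>R ?g n) x) = x" for x
      by (metis blinfun_apply_blinfun_compose blinfun_apply_id_blinfun)
    then have "(\<Sum>n. (t - t\<^sub>0)^n *\<^sub>R ?g n) = Ainv t"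
      by (intro blinfun_eqI) (metis left[OF t])
    then show "(\<lambda>n. (t - t\<^sub>0)^n *\<^sub>R ?g n) sums Ainv t"
      using summable_sums[OF summable_norm_cancel[OF summable']] by simp
  qed
qed

lemma in_S_inverse:
  fixes j T :: "'d::complex_banach \<Rightarrow>\<^sub>L 'x::complex_banach"
  assumes S: "in_S j M r \<theta> T" and zero: "0 \<in> sector r \<theta>"
  shows "\<exists>S. (\<forall>d. blinfun_apply S (T d) = d) \<and> (\<forall>x. T (blinfun_apply S x) = x) \<and> clin S"
proof -
  obtain K where K: "\<And>d. norm d \<le> K * norm (T d)"
    using in_S_bounded_below(2)[OF S zero] by blast
  have "clin T"
    using S unfolding in_S_def closed_op_dom_def by blast
  from invertible_blinfun[OF in_S_bounded_below(1)[OF S zero] K this] show ?thesis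
    by metis
qed

lemma real_analytic_inverse_exists:
  fixes j :: "'d::complex_banach \<Rightarrow>\<^sub>L 'x::complex_banach" and A :: "real \<Rightarrow> 'd \<Rightarrow>\<^sub>L 'x"
  assumes ie: "interval_expansion A \<epsilon> c" and clin: "\<And>t n. t \<in> {0..1} \<Longrightarrow> clin (c t n)"
    and A_S: "\<And>t. t \<in> {0..1} \<Longrightarrow> in_S j M r \<theta> (A t)" and zero: "0 \<in> sector r \<theta>"
  shows "\<exists>Ainv :: real \<Rightarrow> ('x \<Rightarrow>\<^sub>L 'd).
    (\<forall>t\<in>{0..1}. (\<forall>d. blinfun_apply (Ainv t) (A t d) = d) \<and> (\<forall>x. A t (blinfun_apply (Ainv t) x) = x))
    \<and> real_analytic_into clin {0..1} Ainv"
proof -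
  have "\<forall>t\<in>{0..1}. \<exists>S. (\<forall>d. blinfun_apply S (A t d) = d) \<and> (\<forall>x. A t (blinfun_apply S x) = x) \<and> clin S"
    using in_S_inverse[OF A_S zero] by blast
  from bchoice[OF this] obtain Ainv :: "real \<Rightarrow> 'x \<Rightarrow>\<^sub>L 'd"
    where Ainv: "\<forall>t\<in>{0..1}. (\<forall>d. Ainv t (A t d) = d) \<and> (\<forall>x. A t (Ainv t x) = x) \<and> clin (Ainv t)"
    by blast
  moreover have "real_analytic_into clin {0..1} Ainv"
    by (rule real_analytic_inverse[OF ie clin]) (use Ainv in auto)
  ultimately show ?thesis
    by blast
qed

theorem lemma2:
  fixes j :: "'d::complex_banach \<Rightarrow>\<^sub>L 'x::complex_banach"
    and A :: "real \<Rightarrow> ('d \<Rightarrow>\<^sub>L 'x)"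
    and M r \<theta> :: real
  assumes j_inj: "inj (blinfun_apply j)" and j_clin: "clin j"
    and A_closed: "\<forall>t\<in>{0..1}. closed_op_dom j (A t)"
    and A_analytic: "real_analytic_into clin {0..1} A"
    and M_pos: "M > 0" and r_neg: "r < 0" and theta: "0 < \<theta>" "\<theta> < pi / 2"
    and A_S: "\<forall>t\<in>{0..1}. in_S j M r \<theta> (A t)"
  shows "(\<exists>U B. convex U \<and> open U \<and> complex_of_real ` {0..1} \<subseteq> U \<and>
            (\<forall>t\<in>{0..1}. B (complex_of_real t) = A t) \<and>
            complex_analytic_op U B \<and>
            (\<forall>z\<in>U. in_S j (2 * M) r \<theta> (B z)))
       \<and> (\<exists>Ainv :: real \<Rightarrow> ('x \<Rightarrow>\<^sub>L 'd).
            (\<forall>t\<in>{0..1}. (\<forall>d. blinfun_apply (Ainv t) (blinfun_apply (A t) d) = d) \<and>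
                         (\<forall>x. blinfun_apply (A t) (blinfun_apply (Ainv t) x) = x)) \<and>
            real_analytic_into clin {0..1} Ainv)"
proof -
  obtain \<epsilon> c where \<epsilon>: "\<epsilon> > 0" and clin: "\<And>t n. t \<in> {0..1} \<Longrightarrow> clin (c t n)"
    and expansion: "\<And>t. t \<in> {0..1} \<Longrightarrow> local_expansion A t \<epsilon> (c t)"
    by (rule uniform_local_expansions[OF A_analytic]) (rule that)
  have ie: "interval_expansion A \<epsilon> c"
    using \<epsilon> expansion by unfold_locales
  have zero: "0 \<in> sector r \<theta>"
    using r_neg theta by (intro zero_in_sector) auto
  have "\<And>t. t \<in> {0..1} \<Longrightarrow> in_S j M r \<theta> (A t)"
    using A_S by blast
  with extension_in_S[OF ie clin less_imp_le[OF M_pos] _ zero] real_analytic_inverse_exists[OF ie clin _ zero]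
  show ?thesis
    by blast
qed

end
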